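(* Let $X,Y$ be compact metric spaces and $f:X\dashrightarrow Y$ a continuous open-dense defined map. 1) $f_*(SM^+(X))\subset SM^+(Y)$, and for $\mu\in SM^+(X)$ we have $f_*(\mu)(\pm1)=\mu(\pm1)$; in particular $\|f_*(\mu)\|=\|\mu\|$. 2) Let $Z$ be a compact metric space and $g:Y\dashrightarrow Z$ a continuous open-dense defined map, and suppose there is an open dense $U\subset\mathrm{OpenDom}(f)$ with $f(U)\subset\mathrm{OpenDom}(g)$; let $g\circ f$ denote the continuous open-dense defined map $U\to Z$, $x\mapsto g(f(x))$. Then $g_*f_*(\mu)\ge(g\circ f)_*(\mu)$ for all $\mu\in SM^+(X)$. If $f$ and $g$ are continuous maps defined on all of $X$ and $Y$, equality holds. 3) If $\mu_n\in SM^+(X)$ weakly converges to $\mu$ and $\nu$ is a weak cluster point of $f_*(\mu_n)$, then $\nu\le f_*(\mu)$. If $f$ is a continuous map defined on all of $X$, then $f_*(\mu_n)$ weakly converges to $f_*(\mu)$. 4) If $\mu$ is a finite positive Borel measure on $X$ with $\mu(I(f))=0$, then $f_*(\mu)$ is the usual pushforward measure, i.e. $f_*(\mu)(\varphi)=\int_{X\setminus I(f)}\varphi\circ f\,d\mu$. 5) For every $\mu\in SM^+(X)$, $f_*(\mu)=\sup_{\chi\in\mathcal{G}(\mu)}f_*(\chi)$, where $\mathcal{G}(\mu)$ is the set of finite positive Borel measures $\chi$ on $X$ with $\chi\le\mu$. 6) For all $\mu_1,\mu_2\in SM^+(X)$, $f_*(\mu_1+\mu_2)\ge f_*(\mu_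1)+f_*(\mu_2)$.
   Context: $C^0(X)$: real continuous functions with sup norm. A strong submeasure is a sub-linear and bounded map $\mu:C^0(X)\to\mathbb{R}$ (sub-linear: $\mu(\varphi_1+\varphi_2)\le\mu(\varphi_1)+\mu(\varphi_2)$, $\mu(\lambda\varphi)=\lambda\mu(\varphi)$ for $\lambda\ge0$; bounded: $|\mu(\varphi)|\le C\|\varphi\|_{L^\infty}$, with $\|\mu\|$ the least such $C$); it is positive if non-decreasing. $SM^+(X)$ denotes positive strong submeasures; finite positive Borel measures are elements of $SM^+(X)$ via integration. $\mu\le\nu$ means $\mu(\varphi)\le\nu(\varphi)$ for all $\varphi$, and suprema of families are taken pointwise. Weak convergence: $\sup_n\|\mu_n\|<\infty$ and $\mu_n(\varphi)\to\mu(\varphi)$ for all $\varphi$. A continuous open-dense defined map $f:X\dashrightarrow Y$ is a continuous map $f:\mathrm{OpenDom}(f)\to Y$ with $\mathrm{OpenDom}(f)\subset X$ open dense; $I(f)=X\setminus\mathrm{OpenDom}(f)$. For $U\subset X$ open dense and bounded $g:U\to\mathbb{R}$, $E(g)=g$ on $U$ and $E(g)(x)=\limsup_{y\in U,y\to x}g(y)$ for $x\notin U$. For $\varphi\in C^0(Y)$, $f^*(\varphi):=E(\varphi\circ f)$ (bounded upper-semicontinuous on $X$, with $U$ the domain of $f$). The pushforward of $\mu\in SM^+(X)$ is $f_*(\mu)(\varphi):=\inf\{\mu(\psi):\psi\in C^0(X),\ \psi\ge f^*(\varphi)\}$ for $\varphi\in C^0(Y)$. *)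

theory Defs
  imports "HOL-Analysis.Analysis" "HOL-Probability.Probability"
begin

text \<open>Compact metric spaces are modelled as types of class metric_space whose
  universe is compact. A (strong) submeasure
  is a map from real functions to reals; only its values on continuous functions matter.\<close>

definition cfun :: "('a::topological_space \<Rightarrow> real) \<Rightarrow> bool" where
  "cfun \<phi> \<longleftrightarrow> continuous_on UNIV \<phi>"

definition supnorm :: "('a \<Rightarrow> real) \<Rightarrow> real" where
  "supnorm \<phi> = (SUP x. \<bar>\<phi> x\<bar>)"

definition strong_submeasure :: "(('a::topological_space \<Rightarrow> real) \<Rightarrow> real) \<Rightarrow> bool" where
  "strong_submeasure \<mu> \<longleftrightarrow>
     (\<forall>\<phi>1 \<phi>2. cfun \<phi>1 \<and> cfun \<phi>2 \<longrightarrow> \<mu> (\<lambda>x. \<phi>1 x + \<phi>2 x) \<le> \<mu> \<phi>1 + \<mu> \<phi>2) \<and>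
     (\<forall>\<phi> (c::real). cfun \<phi> \<and> c \<ge> 0 \<longrightarrow> \<mu> (\<lambda>x. c * \<phi> x) = c * \<mu> \<phi>) \<and>
     (\<exists>C. \<forall>\<phi>. cfun \<phi> \<longrightarrow> \<bar>\<mu> \<phi>\<bar> \<le> C * supnorm \<phi>)"

definition positive_sm :: "(('a::topological_space \<Rightarrow> real) \<Rightarrow> real) \<Rightarrow> bool" where
  "positive_sm \<mu> \<longleftrightarrow> (\<forall>\<phi> \<psi>. cfun \<phi> \<and> cfun \<psi> \<and> (\<forall>x. \<phi> x \<le> \<psi> x) \<longrightarrow> \<mu> \<phi> \<le> \<mu> \<psi>)"

definition SMp :: "(('a::topological_space \<Rightarrow> real) \<Rightarrow> real) \<Rightarrow> bool" where
  "SMp \<mu> \<longleftrightarrow> strong_submeasure \<mu> \<and> positive_sm \<mu>"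

definition smnorm :: "(('a::topological_space \<Rightarrow> real) \<Rightarrow> real) \<Rightarrow> real" where
  "smnorm \<mu> = Inf {C. \<forall>\<phi>. cfun \<phi> \<longrightarrow> \<bar>\<mu> \<phi>\<bar> \<le> C * supnorm \<phi>}"

definition sm_le :: "(('a::topological_space \<Rightarrow> real) \<Rightarrow> real) \<Rightarrow> (('a \<Rightarrow> real) \<Rightarrow> real) \<Rightarrow> bool" where
  "sm_le \<mu> \<nu> \<longleftrightarrow> (\<forall>\<phi>. cfun \<phi> \<longrightarrow> \<mu> \<phi> \<le> \<nu> \<phi>)"

definition sm_weak_conv :: "(nat \<Rightarrow> ('a::topological_space \<Rightarrow> real) \<Rightarrow> real) \<Rightarrow> (('a \<Rightarrow> real) \<Rightarrow> real) \<Rightarrow> bool" where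
  "sm_weak_conv \<mu>s \<mu> \<longleftrightarrow> (\<exists>B. \<forall>n. smnorm (\<mu>s n) \<le> B) \<and>
     (\<forall>\<phi>. cfun \<phi> \<longrightarrow> (\<lambda>n. \<mu>s n \<phi>) \<longlonglongrightarrow> \<mu> \<phi>)"

definition weak_cluster_point :: "(nat \<Rightarrow> ('a::topological_space \<Rightarrow> real) \<Rightarrow> real) \<Rightarrow> (('a \<Rightarrow> real) \<Rightarrow> real) \<Rightarrow> bool" where
  "weak_cluster_point \<nu>s \<nu> \<longleftrightarrow> (\<exists>r. strict_mono r \<and> sm_weak_conv (\<nu>s \<circ> r) \<nu>)"

definition od_map :: "'a::topological_space set \<Rightarrow> ('a \<Rightarrow> 'b::topological_space) \<Rightarrow> bool" where
  "od_map D f \<longleftrightarrow> open D \<and> closure D = UNIV \<and> continuous_on D f"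

definition Ext :: "'a::metric_space set \<Rightarrow> ('a \<Rightarrow> real) \<Rightarrow> 'a \<Rightarrow> real" where
  "Ext U g x = (if x \<in> U then g x else (INF e\<in>{0<..}. SUP y\<in>U \<inter> ball x e. g y))"

definition pullback :: "'a::metric_space set \<Rightarrow> ('a \<Rightarrow> 'b) \<Rightarrow> ('b \<Rightarrow> real) \<Rightarrow> 'a \<Rightarrow> real" where
  "pullback D f \<phi> = Ext D (\<phi> \<circ> f)"

definition pushforward :: "'a::metric_space set \<Rightarrow> ('a \<Rightarrow> 'b) \<Rightarrow> (('a \<Rightarrow> real) \<Rightarrow> real) \<Rightarrow> ('b \<Rightarrow> real) \<Rightarrow> real" where
  "pushforward D f \<mu> \<phi> = Inf {\<mu> \<psi> | \<psi>. cfun \<psi> \<and> (\<forall>x. \<psi> x \<ge> pullback D f \<phi> x)}"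

definition meas_sm :: "'a::topological_space measure \<Rightarrow> ('a \<Rightarrow> real) \<Rightarrow> real" where
  "meas_sm M \<phi> = integral\<^sup>L M \<phi>"

definition fin_borel_measure :: "'a::topological_space measure \<Rightarrow> bool" where
  "fin_borel_measure M \<longleftrightarrow> sets M = sets borel \<and> finite_measure M"

definition Gset :: "(('a::topological_space \<Rightarrow> real) \<Rightarrow> real) \<Rightarrow> 'a measure set" where
  "Gset \<mu> = {K. fin_borel_measure K \<and> sm_le (meas_sm K) \<mu>}"

end

theory Submission
  imports Defs
begin

text \<open>Write \<open>\<mu>\<^sup>+ g = inf {\<mu> \<psi> | \<psi> continuous, \<psi> \<ge> g}\<close> (\<open>upper_sm \<mu> g\<close>) for the upper extension
  of \<open>\<mu>\<close> to bounded functions, so that \<open>f\<^sub>* \<mu> \<phi> = \<mu>\<^sup>+ (f\<^sup>* \<phi>)\<close>. Both \<open>\<mu>\<^sup>+\<close> and the upper-semicontinuous extension \<open>E\<close>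
  are monotone, subadditive and positively homogeneous, and \<open>E\<close> fixes continuous functions;
  parts 1, 2, 3 and 6 follow from this alone.

  For a measure \<open>\<mu>\<close> with \<open>\<mu>(I(f)) = 0\<close>, the pullback \<open>f\<^sup>* \<phi>\<close> is continuous on the open domain of \<open>f\<close>, so
  it is the almost-everywhere limit of its Lipschitz envelopes, which are continuous majorants;
  dominated convergence identifies \<open>\<mu>\<^sup>+ (f\<^sup>* \<phi>)\<close> with the integral (part 4).

  For part 5, Hahn--Banach extends \<open>t h \<mapsto> t \<mu>\<^sup>+ h\<close>, where \<open>h = f\<^sup>* \<phi>\<close>, to a linear functional \<open>L\<close> on
  \<open>C\<^sup>0(X) + \<real> h\<close> dominated by \<open>\<mu>\<^sup>+\<close>. On \<open>C\<^sup>0(X)\<close> it is positive and below \<open>\<mu>\<close>, so by the Riesz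
  representation theorem (obtained from the outer measure generated by open sets) it is
  integration against a measure \<open>\<chi> \<le> \<mu>\<close>, and \<open>\<chi>\<^sup>+ h \<ge> L h = \<mu>\<^sup>+ h\<close>.\<close>

lemma cfun_const [simp]: "cfun (\<lambda>x. c)"
  unfolding cfun_def by simp

lemma cfun_add [intro]: "cfun f \<Longrightarrow> cfun g \<Longrightarrow> cfun (\<lambda>x. f x + g x)"
  unfolding cfun_def by (intro continuous_intros)

lemma cfun_diff [intro]: "cfun f \<Longrightarrow> cfun g \<Longrightarrow> cfun (\<lambda>x. f x - g x)"
  unfolding cfun_def by (intro continuous_intros)

lemma cfun_mult [intro]: "cfun f \<Longrightarrow> cfun (\<lambda>x. c * f x)"
  unfolding cfun_def by (intro continuous_intros)

lemma cfun_uminus [intro]: "cfun f \<Longrightarrow> cfun (\<lambda>x. - f x)"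
  unfolding cfun_def by (intro continuous_intros)

lemma cfun_max [intro]: "cfun f \<Longrightarrow> cfun g \<Longrightarrow> cfun (\<lambda>x. max (f x) (g x))"
  unfolding cfun_def by (rule continuous_on_max)

lemma cfun_min [intro]: "cfun f \<Longrightarrow> cfun g \<Longrightarrow> cfun (\<lambda>x. min (f x) (g x))"
  unfolding cfun_def by (rule continuous_on_min)

lemma cfun_sum [intro]: "(\<And>i. i \<in> I \<Longrightarrow> cfun (f i)) \<Longrightarrow> cfun (\<lambda>x. \<Sum>i\<in>I. f i x)"
  unfolding cfun_def by (rule continuous_on_sum) auto

lemma cfun_infdist [intro]: "cfun (\<lambda>x. infdist x A)"
  unfolding cfun_def by (intro continuous_on_infdist continuous_on_id)

lemma cfun_compose: "continuous_on UNIV f \<Longrightarrow> cfun \<phi> \<Longrightarrow> cfun (\<lambda>x. \<phi> (f x))"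
  unfolding cfun_def by (metis continuous_on_compose2 subset_UNIV)

lemma cfun_approachable:
  assumes "cfun (\<psi>::'a::metric_space \<Rightarrow> real)" "\<epsilon> > 0"
  shows "\<exists>d>0. \<forall>y. dist x y < d \<longrightarrow> \<bar>\<psi> y - \<psi> x\<bar> < \<epsilon>"
proof -
  have "continuous_on UNIV \<psi>" using assms(1) by (simp add: cfun_def)
  then obtain d where "d > 0" "\<forall>y\<in>UNIV. dist y x < d \<longrightarrow> dist (\<psi> y) (\<psi> x) < \<epsilon>"
    using assms(2) unfolding continuous_on_iff by blast
  then show ?thesis by (auto simp: dist_commute dist_real_def)
qed

lemma abs_le_supnorm:
  assumes "compact (UNIV::'a::metric_space set)" "cfun (\<phi>::'a \<Rightarrow> real)"
  shows "\<bar>\<phi> x\<bar> \<le> supnorm \<phi>"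
proof -
  have "compact (range \<phi>)" using assms unfolding cfun_def by (metis compact_continuous_image)
  then have "bounded (range \<phi>)" by (rule compact_imp_bounded)
  then obtain a where "\<And>y. \<bar>\<phi> y\<bar> \<le> a" unfolding bounded_real by auto
  then have "bdd_above (range (\<lambda>x. \<bar>\<phi> x\<bar>))" by (intro bdd_aboveI2)
  then show ?thesis unfolding supnorm_def by (rule cSUP_upper[OF UNIV_I])
qed

lemma supnorm_nonneg:
  assumes "compact (UNIV::'a::metric_space set)" "cfun (\<phi>::'a \<Rightarrow> real)"
  shows "0 \<le> supnorm \<phi>"
  using abs_le_supnorm[OF assms, of undefined] by linarith

lemma supnorm_const [simp]: "supnorm (\<lambda>x. c) = \<bar>c\<bar>"
  unfolding supnorm_def by simp

context
  fixes \<mu> :: "('a::topological_space \<Rightarrow> real) \<Rightarrow> real"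
  assumes \<mu>: "SMp \<mu>"
begin

lemma SMp_add: "cfun f \<Longrightarrow> cfun g \<Longrightarrow> \<mu> (\<lambda>x. f x + g x) \<le> \<mu> f + \<mu> g"
  using \<mu> unfolding SMp_def strong_submeasure_def by blast

lemma SMp_mult: "cfun f \<Longrightarrow> c \<ge> 0 \<Longrightarrow> \<mu> (\<lambda>x. c * f x) = c * \<mu> f"
  using \<mu> unfolding SMp_def strong_submeasure_def by blast

lemma SMp_mono: "cfun f \<Longrightarrow> cfun g \<Longrightarrow> (\<And>x. f x \<le> g x) \<Longrightarrow> \<mu> f \<le> \<mu> g"
  using \<mu> unfolding SMp_def positive_sm_def by blast

lemma SMp_zero: "\<mu> (\<lambda>x. 0) = 0"
  using SMp_mult[of "\<lambda>x. 0" 0] by simp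

end

text \<open>No subadditivity is assumed, so that this applies to the pushforward before it is known to be a
  submeasure.\<close>

lemma abs_le_max_const_supnorm:
  fixes \<nu> :: "('a::metric_space \<Rightarrow> real) \<Rightarrow> real"
  assumes cX: "compact (UNIV::'a set)"
    and hom: "\<And>\<phi> c. cfun \<phi> \<Longrightarrow> c \<ge> 0 \<Longrightarrow> \<nu> (\<lambda>x. c * \<phi> x) = c * \<nu> \<phi>"
    and pos: "positive_sm \<nu>" and \<phi>: "cfun \<phi>"
  shows "\<bar>\<nu> \<phi>\<bar> \<le> max \<bar>\<nu> (\<lambda>x. 1)\<bar> \<bar>\<nu> (\<lambda>x. -1)\<bar> * supnorm \<phi>"
proof -
  define s where "s = supnorm \<phi>"
  define m where "m = max \<bar>\<nu> (\<lambda>x. 1)\<bar> \<bar>\<nu> (\<lambda>x. -1)\<bar>"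
  have s0: "s \<ge> 0" using supnorm_nonneg[OF cX \<phi>] by (simp add: s_def)
  have s: "\<phi> x \<le> s" "- s \<le> \<phi> x" for x
    using abs_le_supnorm[OF cX \<phi>, of x] by (simp_all add: s_def abs_le_iff)
  have mono: "\<nu> f \<le> \<nu> g" if "cfun f" "cfun g" "\<And>x. f x \<le> g x" for f g
    using pos that unfolding positive_sm_def by blast
  have "\<nu> \<phi> \<le> \<nu> (\<lambda>x. s * 1)"
    using s(1) by (intro mono \<phi>) auto
  also have "\<dots> = s * \<nu> (\<lambda>x. 1)" by (rule hom) (use s0 in auto)
  also have "\<dots> \<le> s * m" using s0 by (intro mult_left_mono) (auto simp: m_def)
  finally have up: "\<nu> \<phi> \<le> s * m" .
  have "s * (- m) \<le> s * \<nu> (\<lambda>x. -1)" using s0 by (intro mult_left_mono) (auto simp: m_def)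
  also have "\<dots> = \<nu> (\<lambda>x. s * -1)" by (rule hom[symmetric]) (use s0 in auto)
  also have "\<dots> \<le> \<nu> \<phi>"
    using s(2) by (intro mono \<phi>) auto
  finally show ?thesis using up by (simp add: abs_le_iff m_def s_def mult.commute)
qed

lemma smnorm_eq_max_const:
  fixes \<nu> :: "('a::metric_space \<Rightarrow> real) \<Rightarrow> real"
  assumes cX: "compact (UNIV::'a set)"
    and hom: "\<And>\<phi> c. cfun \<phi> \<Longrightarrow> c \<ge> 0 \<Longrightarrow> \<nu> (\<lambda>x. c * \<phi> x) = c * \<nu> \<phi>"
    and pos: "positive_sm \<nu>"
  shows "smnorm \<nu> = max \<bar>\<nu> (\<lambda>x. 1)\<bar> \<bar>\<nu> (\<lambda>x. -1)\<bar>"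
  unfolding smnorm_def
proof (rule cInf_eq_minimum)
  show "max \<bar>\<nu> (\<lambda>x. 1)\<bar> \<bar>\<nu> (\<lambda>x. -1)\<bar> \<in> {C. \<forall>\<phi>. cfun \<phi> \<longrightarrow> \<bar>\<nu> \<phi>\<bar> \<le> C * supnorm \<phi>}"
    using abs_le_max_const_supnorm[OF cX hom pos] by auto
  fix C assume "C \<in> {C. \<forall>\<phi>. cfun \<phi> \<longrightarrow> \<bar>\<nu> \<phi>\<bar> \<le> C * supnorm \<phi>}"
  then have "\<bar>\<nu> (\<lambda>x. 1)\<bar> \<le> C * supnorm (\<lambda>x::'a. 1::real)"
    "\<bar>\<nu> (\<lambda>x. -1)\<bar> \<le> C * supnorm (\<lambda>x::'a. -1::real)"
    by (auto simp del: supnorm_const)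
  then show "max \<bar>\<nu> (\<lambda>x. 1)\<bar> \<bar>\<nu> (\<lambda>x. -1)\<bar> \<le> C" by simp
qed

lemma smnorm_SMp:
  assumes "compact (UNIV::'a::metric_space set)" "SMp (\<mu> :: ('a \<Rightarrow> real) \<Rightarrow> real)"
  shows "smnorm \<mu> = max \<bar>\<mu> (\<lambda>x. 1)\<bar> \<bar>\<mu> (\<lambda>x. -1)\<bar>"
  using assms by (intro smnorm_eq_max_const) (auto simp: SMp_mult SMp_def)

section \<open>The upper extension of a submeasure to bounded functions\<close>

definition upper_sm :: "(('a::topological_space \<Rightarrow> real) \<Rightarrow> real) \<Rightarrow> ('a \<Rightarrow> real) \<Rightarrow> real" where
  "upper_sm \<mu> g = Inf {\<mu> \<psi> | \<psi>. cfun \<psi> \<and> (\<forall>x. \<psi> x \<ge> g x)}"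

lemma pushforward_eq_upper_sm: "pushforward D f \<mu> \<phi> = upper_sm \<mu> (pullback D f \<phi>)"
  unfolding pushforward_def upper_sm_def by simp

lemma upper_sm_greatest:
  assumes "\<And>x. g x \<le> B" "\<And>\<psi>. cfun \<psi> \<Longrightarrow> \<forall>x. \<psi> x \<ge> g x \<Longrightarrow> c \<le> \<mu> \<psi>"
  shows "c \<le> upper_sm \<mu> g"
  unfolding upper_sm_def
proof (rule cInf_greatest)
  show "{\<mu> \<psi> |\<psi>. cfun \<psi> \<and> (\<forall>x. g x \<le> \<psi> x)} \<noteq> {}"
    using assms(1) by (auto intro!: exI[of _ "\<lambda>x. B"])
qed (use assms in auto)

context
  fixes \<mu> :: "('a::metric_space \<Rightarrow> real) \<Rightarrow> real"
  assumes \<mu>: "SMp \<mu>"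
begin

lemma upper_sm_le:
  assumes "cfun \<psi>" "\<And>x. g x \<le> \<psi> x" "\<And>x. - B \<le> g x"
  shows "upper_sm \<mu> g \<le> \<mu> \<psi>"
  unfolding upper_sm_def
proof (rule cInf_lower)
  show "\<mu> \<psi> \<in> {\<mu> \<psi> |\<psi>. cfun \<psi> \<and> (\<forall>x. g x \<le> \<psi> x)}" using assms by auto
  have "\<mu> (\<lambda>x. - B) \<le> \<mu> \<psi>'" if "cfun \<psi>'" "\<forall>x. g x \<le> \<psi>' x" for \<psi>'
    using that assms(3) by (intro SMp_mono[OF \<mu>]) (auto intro: order_trans)
  then show "bdd_below {\<mu> \<psi> |\<psi>. cfun \<psi> \<and> (\<forall>x. g x \<le> \<psi> x)}"
    by (intro bdd_belowI[where m="\<mu> (\<lambda>x. - B)"]) blast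
qed

lemma upper_sm_le_abs:
  assumes "cfun \<psi>" "\<And>x. g x \<le> \<psi> x" "\<And>x. \<bar>g x\<bar> \<le> B"
  shows "upper_sm \<mu> g \<le> \<mu> \<psi>"
proof (rule upper_sm_le[where B=B])
  show "- B \<le> g x" for x using assms(3)[of x] by linarith
qed (use assms in auto)

lemma upper_sm_eq:
  assumes g: "cfun g" "\<And>x. \<bar>g x\<bar> \<le> B"
  shows "upper_sm \<mu> g = \<mu> g"
proof (rule antisym)
  show "upper_sm \<mu> g \<le> \<mu> g" using g by (intro upper_sm_le_abs) auto
  show "\<mu> g \<le> upper_sm \<mu> g"
  proof (rule upper_sm_greatest[of g B])
    show "g x \<le> B" for x using g(2)[of x] by linarith
  qed (use g SMp_mono[OF \<mu>] in auto)
qed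

lemma upper_sm_cfun:
  assumes cX: "compact (UNIV::'a set)" and g: "cfun g"
  shows "upper_sm \<mu> g = \<mu> g"
  using abs_le_supnorm[OF cX g] g by (intro upper_sm_eq)

lemma upper_sm_mono:
  assumes "\<And>x. g1 x \<le> g2 x" "\<And>x. \<bar>g1 x\<bar> \<le> B1" "\<And>x. \<bar>g2 x\<bar> \<le> B2"
  shows "upper_sm \<mu> g1 \<le> upper_sm \<mu> g2"
proof (rule upper_sm_greatest[of g2 B2])
  show "g2 x \<le> B2" for x using assms(3)[of x] by linarith
  show "upper_sm \<mu> g1 \<le> \<mu> \<psi>" if "cfun \<psi>" "\<forall>x. g2 x \<le> \<psi> x" for \<psi>
    using that assms by (intro upper_sm_le_abs[of \<psi> g1 B1]) (auto intro: order_trans)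
qed

lemma upper_sm_add_le:
  assumes "\<And>x. \<bar>g1 x\<bar> \<le> B1" "\<And>x. \<bar>g2 x\<bar> \<le> B2"
  shows "upper_sm \<mu> (\<lambda>x. g1 x + g2 x) \<le> upper_sm \<mu> g1 + upper_sm \<mu> g2"
proof -
  let ?u = "upper_sm \<mu> (\<lambda>x. g1 x + g2 x)"
  have "?u - upper_sm \<mu> g2 \<le> upper_sm \<mu> g1"
  proof (rule upper_sm_greatest[of g1 B1])
    show "g1 x \<le> B1" for x using assms(1)[of x] by linarith
    fix \<psi>1 assume \<psi>1: "cfun \<psi>1" "\<forall>x. g1 x \<le> \<psi>1 x"
    have "?u - \<mu> \<psi>1 \<le> upper_sm \<mu> g2"
    proof (rule upper_sm_greatest[of g2 B2])
      show "g2 x \<le> B2" for x using assms(2)[of x] by linarith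
      fix \<psi>2 assume \<psi>2: "cfun \<psi>2" "\<forall>x. g2 x \<le> \<psi>2 x"
      have "?u \<le> \<mu> (\<lambda>x. \<psi>1 x + \<psi>2 x)"
      proof (rule upper_sm_le_abs[where B="B1 + B2"])
        show "\<bar>g1 x + g2 x\<bar> \<le> B1 + B2" for x
          using abs_triangle_ineq[of "g1 x" "g2 x"] assms[of x] by linarith
      qed (use \<psi>1 \<psi>2 in \<open>auto intro: add_mono\<close>)
      also have "\<dots> \<le> \<mu> \<psi>1 + \<mu> \<psi>2" using SMp_add[OF \<mu>] \<psi>1 \<psi>2 by blast
      finally show "?u - \<mu> \<psi>1 \<le> \<mu> \<psi>2" by simp
    qed
    then show "?u - upper_sm \<mu> g2 \<le> \<mu> \<psi>1" by simp
  qed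
  then show ?thesis by simp
qed

lemma upper_sm_mult_pos:
  assumes c: "c > 0" and g: "\<And>x. \<bar>g x\<bar> \<le> B"
  shows "upper_sm \<mu> (\<lambda>x. c * g x) = c * upper_sm \<mu> g"
proof (rule antisym)
  have cg: "\<bar>c * g x\<bar> \<le> c * B" for x using g[of x] c by (simp add: abs_mult)
  have "upper_sm \<mu> (\<lambda>x. c * g x) / c \<le> upper_sm \<mu> g"
  proof (rule upper_sm_greatest[of g B])
    show "g x \<le> B" for x using g[of x] by linarith
    fix \<psi> assume \<psi>: "cfun \<psi>" "\<forall>x. g x \<le> \<psi> x"
    have "upper_sm \<mu> (\<lambda>x. c * g x) \<le> \<mu> (\<lambda>x. c * \<psi> x)"
      using \<psi> c cg by (intro upper_sm_le_abs[where B="c * B"]) auto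
    also have "\<dots> = c * \<mu> \<psi>" using SMp_mult[OF \<mu>] \<psi> c by simp
    finally show "upper_sm \<mu> (\<lambda>x. c * g x) / c \<le> \<mu> \<psi>" using c by (simp add: field_simps)
  qed
  then show "upper_sm \<mu> (\<lambda>x. c * g x) \<le> c * upper_sm \<mu> g" using c by (simp add: field_simps)
  show "c * upper_sm \<mu> g \<le> upper_sm \<mu> (\<lambda>x. c * g x)"
  proof (rule upper_sm_greatest[of _ "c * B"])
    show "c * g x \<le> c * B" for x using cg[of x] by linarith
    fix \<psi> assume \<psi>: "cfun \<psi>" "\<forall>x. c * g x \<le> \<psi> x"
    have "upper_sm \<mu> g \<le> \<mu> (\<lambda>x. (1/c) * \<psi> x)"
      using \<psi> c g cfun_mult[OF \<psi>(1), of "1/c"] by (intro upper_sm_le_abs[where B=B]) (auto simp: field_simps)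
    also have "\<dots> = \<mu> \<psi> / c" using SMp_mult[OF \<mu>, of \<psi> "1/c"] \<psi> c by simp
    finally show "c * upper_sm \<mu> g \<le> \<mu> \<psi>" using c by (simp add: field_simps)
  qed
qed

end
section \<open>The upper-semicontinuous extension\<close>

lemma closure_UNIV_approachable:
  assumes "closure U = UNIV" "e > 0"
  shows "\<exists>y\<in>U. dist x y < e"
proof -
  have "x \<in> closure U" using assms(1) by simp
  then obtain y where "y \<in> U" "dist y x < e" using assms(2) closure_approachable by blast
  then show ?thesis by (auto simp: dist_commute)
qed

context
  fixes U :: "'a::metric_space set" and k :: "'a \<Rightarrow> real" and B :: real
  assumes dense: "closure U = UNIV" and bounded: "\<forall>y\<in>U. \<bar>k y\<bar> \<le> B"
begin

lemma SUP_ball_bounds: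
  assumes e: "e > 0"
  shows "U \<inter> ball x e \<noteq> {}" "bdd_above (k ` (U \<inter> ball x e))"
    "- B \<le> (SUP y\<in>U \<inter> ball x e. k y)"
proof -
  obtain y where "y \<in> U" "dist x y < e" using closure_UNIV_approachable[OF dense e] by blast
  then have y: "y \<in> U \<inter> ball x e" by simp
  then show "U \<inter> ball x e \<noteq> {}" by blast
  show bdd: "bdd_above (k ` (U \<inter> ball x e))"
    using bounded by (intro bdd_aboveI2[where M=B]) (auto simp: abs_le_iff)
  have "- B \<le> k y" using bounded y by (auto simp: abs_le_iff)
  also have "\<dots> \<le> (SUP y\<in>U \<inter> ball x e. k y)" by (rule cSUP_upper[OF y bdd])
  finally show "- B \<le> (SUP y\<in>U \<inter> ball x e. k y)" .
qed

lemma Ext_outside: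
  assumes "x \<notin> U"
  shows "Ext U k x = (INF e\<in>{0<..}. SUP y\<in>U \<inter> ball x e. k y)"
    and "bdd_below ((\<lambda>e. SUP y\<in>U \<inter> ball x e. k y) ` {0<..})"
  using assms SUP_ball_bounds(3) by (auto simp: Ext_def intro!: bdd_belowI2[where m="-B"])

lemma Ext_upper_approx:
  assumes x: "x \<notin> U" and \<epsilon>: "\<epsilon> > 0"
  shows "\<exists>e>0. \<forall>y\<in>U. dist x y < e \<longrightarrow> k y \<le> Ext U k x + \<epsilon>"
proof -
  have "(INF e\<in>{0<..}. SUP y\<in>U \<inter> ball x e. k y) < Ext U k x + \<epsilon>"
    using Ext_outside(1)[OF x] \<epsilon> by simp
  then obtain e where e: "e > 0" "(SUP y\<in>U \<inter> ball x e. k y) < Ext U k x + \<epsilon>"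
    using cINF_less_iff[OF _ Ext_outside(2)[OF x]] by force
  have "k y \<le> (SUP y\<in>U \<inter> ball x e. k y)" if "y \<in> U" "dist x y < e" for y
    using that SUP_ball_bounds(2)[OF e(1)] by (intro cSUP_upper) auto
  then show ?thesis using e by force
qed

lemma Ext_leI:
  assumes x: "x \<notin> U"
    and H: "\<And>\<epsilon>. \<epsilon> > 0 \<Longrightarrow> \<exists>e>0. \<forall>y\<in>U. dist x y < e \<longrightarrow> k y \<le> c + \<epsilon>"
  shows "Ext U k x \<le> c"
proof (rule field_le_epsilon)
  fix \<epsilon> :: real assume "\<epsilon> > 0"
  then obtain e where e: "e > 0" "\<forall>y\<in>U. dist x y < e \<longrightarrow> k y \<le> c + \<epsilon>" using H by blast
  have "Ext U k x \<le> (SUP y\<in>U \<inter> ball x e. k y)"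
    using Ext_outside[OF x] e(1) by (auto intro: cINF_lower)
  also have "\<dots> \<le> c + \<epsilon>"
    using SUP_ball_bounds(1)[OF e(1)] e(2) by (intro cSUP_least) auto
  finally show "Ext U k x \<le> c + \<epsilon>" .
qed

lemma Ext_geI:
  assumes x: "x \<notin> U" and H: "\<And>e. e > 0 \<Longrightarrow> \<exists>y\<in>U. dist x y < e \<and> c \<le> k y"
  shows "c \<le> Ext U k x"
proof (rule field_le_epsilon)
  fix \<epsilon> :: real assume "\<epsilon> > 0"
  then obtain e where e: "e > 0" "\<forall>y\<in>U. dist x y < e \<longrightarrow> k y \<le> Ext U k x + \<epsilon>"
    using Ext_upper_approx[OF x] by blast
  obtain y where "y \<in> U" "dist x y < e" "c \<le> k y" using H[OF e(1)] by blast
  then show "c \<le> Ext U k x + \<epsilon>" using e(2) by fastforce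
qed

lemma abs_Ext_le: "\<bar>Ext U k x\<bar> \<le> B"
proof (cases "x \<in> U")
  case True then show ?thesis using bounded by (simp add: Ext_def)
next
  case False
  have "Ext U k x \<le> B"
    using bounded by (intro Ext_leI[OF False]) (auto simp: abs_le_iff intro!: exI[of _ 1])
  moreover have "- B \<le> Ext U k x"
  proof (rule Ext_geI[OF False])
    fix e :: real assume "e > 0"
    then obtain y where y: "y \<in> U" "dist x y < e" using closure_UNIV_approachable[OF dense] by blast
    moreover have "- B \<le> k y" using bounded y(1) by (auto simp: abs_le_iff)
    ultimately show "\<exists>y\<in>U. dist x y < e \<and> - B \<le> k y" by blast
  qed
  ultimately show ?thesis by simp
qed

lemma Ext_le_cfun:
  assumes \<psi>: "cfun \<psi>" and le: "\<forall>y\<in>U. k y \<le> \<psi> y"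
  shows "Ext U k x \<le> \<psi> x"
proof (cases "x \<in> U")
  case True then show ?thesis using le by (simp add: Ext_def)
next
  case False
  show ?thesis
  proof (rule Ext_leI[OF False])
    fix \<epsilon> :: real assume "\<epsilon> > 0"
    then obtain d where "d > 0" "\<forall>y. dist x y < d \<longrightarrow> \<bar>\<psi> y - \<psi> x\<bar> < \<epsilon>"
      using cfun_approachable[OF \<psi>] by blast
    then show "\<exists>e>0. \<forall>y\<in>U. dist x y < e \<longrightarrow> k y \<le> \<psi> x + \<epsilon>"
      using le by (intro exI[of _ d]) (force simp: abs_less_iff)
  qed
qed

lemma Ext_eq_cfun:
  assumes \<psi>: "cfun \<psi>" and eq: "\<forall>y\<in>U. k y = \<psi> y"
  shows "Ext U k x = \<psi> x"
proof (cases "x \<in> U")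
  case True then show ?thesis using eq by (simp add: Ext_def)
next
  case False
  have "\<psi> x \<le> Ext U k x"
  proof (rule field_le_epsilon)
    fix \<epsilon> :: real assume "\<epsilon> > 0"
    then obtain d where d: "d > 0" "\<forall>y. dist x y < d \<longrightarrow> \<bar>\<psi> y - \<psi> x\<bar> < \<epsilon>"
      using cfun_approachable[OF \<psi>] by blast
    have "\<psi> x - \<epsilon> \<le> Ext U k x"
    proof (rule Ext_geI[OF False])
      fix e :: real assume "e > 0"
      then obtain y where "y \<in> U" "dist x y < min e d"
        using closure_UNIV_approachable[OF dense, of "min e d"] d(1) by auto
      then show "\<exists>y\<in>U. dist x y < e \<and> \<psi> x - \<epsilon> \<le> k y"
        using d eq by (intro bexI[of _ y]) (auto simp: abs_less_iff)
    qed
    then show "\<psi> x \<le> Ext U k x + \<epsilon>" by simp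
  qed
  then show ?thesis using Ext_le_cfun[OF \<psi>] eq by (simp add: order_antisym)
qed

end

lemma Ext_add_le:
  fixes U :: "'a::metric_space set" and k1 k2 :: "'a \<Rightarrow> real"
  assumes dense: "closure U = UNIV"
    and bd1: "\<forall>y\<in>U. \<bar>k1 y\<bar> \<le> B1" and bd2: "\<forall>y\<in>U. \<bar>k2 y\<bar> \<le> B2"
  shows "Ext U (\<lambda>y. k1 y + k2 y) x \<le> Ext U k1 x + Ext U k2 x"
proof (cases "x \<in> U")
  case True then show ?thesis by (simp add: Ext_def)
next
  case False
  have bd: "\<forall>y\<in>U. \<bar>k1 y + k2 y\<bar> \<le> B1 + B2"
    using bd1 bd2 abs_triangle_ineq[of "k1 _" "k2 _"] by (meson add_mono order_trans)
  show ?thesis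
  proof (rule Ext_leI[OF dense bd False])
    fix \<epsilon> :: real assume "\<epsilon> > 0"
    then obtain e1 e2 where "e1 > 0" "\<forall>y\<in>U. dist x y < e1 \<longrightarrow> k1 y \<le> Ext U k1 x + \<epsilon>/2"
      and "e2 > 0" "\<forall>y\<in>U. dist x y < e2 \<longrightarrow> k2 y \<le> Ext U k2 x + \<epsilon>/2"
      using Ext_upper_approx[OF dense bd1 False, of "\<epsilon>/2"] Ext_upper_approx[OF dense bd2 False, of "\<epsilon>/2"]
      by auto
    then show "\<exists>e>0. \<forall>y\<in>U. dist x y < e \<longrightarrow> k1 y + k2 y \<le> Ext U k1 x + Ext U k2 x + \<epsilon>"
      by (intro exI[of _ "min e1 e2"]) force
  qed
qed

lemma Ext_mono:
  fixes U :: "'a::metric_space set" and k1 k2 :: "'a \<Rightarrow> real"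
  assumes dense: "closure U = UNIV"
    and bd1: "\<forall>y\<in>U. \<bar>k1 y\<bar> \<le> B1" and bd2: "\<forall>y\<in>U. \<bar>k2 y\<bar> \<le> B2"
    and le: "\<forall>y\<in>U. k1 y \<le> k2 y"
  shows "Ext U k1 x \<le> Ext U k2 x"
proof (cases "x \<in> U")
  case True then show ?thesis using le by (simp add: Ext_def)
next
  case False
  show ?thesis
  proof (rule Ext_leI[OF dense bd1 False])
    fix \<epsilon> :: real assume "\<epsilon> > 0"
    then obtain e where "e > 0" "\<forall>y\<in>U. dist x y < e \<longrightarrow> k2 y \<le> Ext U k2 x + \<epsilon>"
      using Ext_upper_approx[OF dense bd2 False] by auto
    then show "\<exists>e>0. \<forall>y\<in>U. dist x y < e \<longrightarrow> k1 y \<le> Ext U k2 x + \<epsilon>"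
      using le by (intro exI[of _ e]) (auto intro: order_trans)
  qed
qed

lemma Ext_mult_pos:
  fixes U :: "'a::metric_space set" and k :: "'a \<Rightarrow> real"
  assumes dense: "closure U = UNIV" and bounded: "\<forall>y\<in>U. \<bar>k y\<bar> \<le> B" and c: "c > 0"
  shows "Ext U (\<lambda>y. c * k y) x = c * Ext U k x"
proof (cases "x \<in> U")
  case True then show ?thesis by (simp add: Ext_def)
next
  case False
  have bdc: "\<forall>y\<in>U. \<bar>c * k y\<bar> \<le> c * B" using bounded c by (simp add: abs_mult)
  have "Ext U (\<lambda>y. c * k y) x \<le> c * Ext U k x"
  proof (rule Ext_leI[OF dense bdc False])
    fix \<epsilon> :: real assume "\<epsilon> > 0"
    then obtain e where "e > 0" "\<forall>y\<in>U. dist x y < e \<longrightarrow> k y \<le> Ext U k x + \<epsilon> / c"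
      using Ext_upper_approx[OF dense bounded False, of "\<epsilon> / c"] c by auto
    then show "\<exists>e>0. \<forall>y\<in>U. dist x y < e \<longrightarrow> c * k y \<le> c * Ext U k x + \<epsilon>"
      using c by (intro exI[of _ e]) (auto simp: field_simps)
  qed
  moreover have "Ext U k x \<le> Ext U (\<lambda>y. c * k y) x / c"
  proof (rule Ext_leI[OF dense bounded False])
    fix \<epsilon> :: real assume "\<epsilon> > 0"
    then obtain e where "e > 0"
      "\<forall>y\<in>U. dist x y < e \<longrightarrow> c * k y \<le> Ext U (\<lambda>y. c * k y) x + c * \<epsilon>"
      using Ext_upper_approx[OF dense bdc False, of "c * \<epsilon>"] c by auto
    then show "\<exists>e>0. \<forall>y\<in>U. dist x y < e \<longrightarrow> k y \<le> Ext U (\<lambda>y. c * k y) x / c + \<epsilon>"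
      using c by (intro exI[of _ e]) (auto simp: field_simps)
  qed
  ultimately show ?thesis using c by (simp add: field_simps)
qed

lemma pullback_altdef: "pullback D f \<phi> = Ext D (\<lambda>y. \<phi> (f y))"
  by (simp add: pullback_def o_def)

lemma pullback_on_domain: "x \<in> D \<Longrightarrow> pullback D f \<phi> x = \<phi> (f x)"
  by (simp add: pullback_def Ext_def)

lemma pullback_UNIV: "pullback UNIV f \<phi> = (\<lambda>x. \<phi> (f x))"
  by (rule ext) (simp add: pullback_on_domain)

lemma abs_comp_le_supnorm:
  fixes f :: "'a \<Rightarrow> 'b::metric_space"
  assumes "compact (UNIV::'b set)" "cfun \<phi>"
  shows "\<forall>y\<in>D. \<bar>\<phi> (f y)\<bar> \<le> supnorm \<phi>"
  using abs_le_supnorm[OF assms] by auto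

lemma abs_pullback_le:
  fixes f :: "'a::metric_space \<Rightarrow> 'b::metric_space"
  assumes "closure D = UNIV" "compact (UNIV::'b set)" "cfun \<phi>"
  shows "\<bar>pullback D f \<phi> x\<bar> \<le> supnorm \<phi>"
  unfolding pullback_altdef by (rule abs_Ext_le[OF assms(1) abs_comp_le_supnorm[OF assms(2,3)]])

lemma pullback_const:
  fixes f :: "'a::metric_space \<Rightarrow> 'b::metric_space"
  assumes "closure D = UNIV"
  shows "pullback D f (\<lambda>x. c) = (\<lambda>x. c)"
  unfolding pullback_altdef by (rule ext, rule Ext_eq_cfun[OF assms, of _ "\<bar>c\<bar>"]) auto

context
  fixes D :: "'a::metric_space set" and f :: "'a \<Rightarrow> 'b::metric_space"
    and \<mu> :: "('a \<Rightarrow> real) \<Rightarrow> real"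
  assumes cY: "compact (UNIV :: 'b set)" and dense: "closure D = UNIV" and \<mu>: "SMp \<mu>"
begin

lemma pushforward_add_le:
  assumes \<phi>1: "cfun \<phi>1" and \<phi>2: "cfun \<phi>2"
  shows "pushforward D f \<mu> (\<lambda>x. \<phi>1 x + \<phi>2 x) \<le> pushforward D f \<mu> \<phi>1 + pushforward D f \<mu> \<phi>2"
proof -
  have "pullback D f (\<lambda>x. \<phi>1 x + \<phi>2 x) x \<le> pullback D f \<phi>1 x + pullback D f \<phi>2 x" for x
    unfolding pullback_altdef
    by (rule Ext_add_le[OF dense abs_comp_le_supnorm[OF cY \<phi>1] abs_comp_le_supnorm[OF cY \<phi>2]])
  moreover have "\<bar>pullback D f \<phi>1 x + pullback D f \<phi>2 x\<bar> \<le> supnorm \<phi>1 + supnorm \<phi>2" for x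
    using abs_pullback_le[OF dense cY \<phi>1, of f x] abs_pullback_le[OF dense cY \<phi>2, of f x] by linarith
  ultimately have "upper_sm \<mu> (pullback D f (\<lambda>x. \<phi>1 x + \<phi>2 x))
      \<le> upper_sm \<mu> (\<lambda>x. pullback D f \<phi>1 x + pullback D f \<phi>2 x)"
    using abs_pullback_le[OF dense cY cfun_add[OF \<phi>1 \<phi>2]] by (intro upper_sm_mono[OF \<mu>])
  also have "\<dots> \<le> upper_sm \<mu> (pullback D f \<phi>1) + upper_sm \<mu> (pullback D f \<phi>2)"
    using abs_pullback_le[OF dense cY] \<phi>1 \<phi>2 by (intro upper_sm_add_le[OF \<mu>])
  finally show ?thesis unfolding pushforward_eq_upper_sm .
qed

lemma pushforward_const: "pushforward D f \<mu> (\<lambda>_. c) = \<mu> (\<lambda>_. c)"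
  unfolding pushforward_eq_upper_sm pullback_const[OF dense] by (intro upper_sm_eq[OF \<mu>, where B="\<bar>c\<bar>"]) auto

lemma pushforward_mult:
  assumes \<phi>: "cfun \<phi>" and c: "c \<ge> 0"
  shows "pushforward D f \<mu> (\<lambda>x. c * \<phi> x) = c * pushforward D f \<mu> \<phi>"
proof (cases "c = 0")
  case True
  then show ?thesis using pushforward_const[of 0] SMp_zero[OF \<mu>] by simp
next
  case False
  then have "c > 0" using c by simp
  moreover have "pullback D f (\<lambda>x. c * \<phi> x) = (\<lambda>x. c * pullback D f \<phi> x)"
    unfolding pullback_altdef
    by (rule ext, rule Ext_mult_pos[OF dense abs_comp_le_supnorm[OF cY \<phi>] \<open>c > 0\<close>])
  ultimately show ?thesis
    unfolding pushforward_eq_upper_sm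
    using upper_sm_mult_pos[OF \<mu> _ abs_pullback_le[OF dense cY \<phi>, of f]] by simp
qed

lemma pushforward_mono:
  assumes \<phi>: "cfun \<phi>" and \<psi>: "cfun \<psi>" and le: "\<And>x. \<phi> x \<le> \<psi> x"
  shows "pushforward D f \<mu> \<phi> \<le> pushforward D f \<mu> \<psi>"
proof -
  have "pullback D f \<phi> x \<le> pullback D f \<psi> x" for x
    unfolding pullback_altdef using le
    by (intro Ext_mono[OF dense abs_comp_le_supnorm[OF cY \<phi>] abs_comp_le_supnorm[OF cY \<psi>]]) auto
  then show ?thesis
    unfolding pushforward_eq_upper_sm
    using abs_pullback_le[OF dense cY \<phi>] abs_pullback_le[OF dense cY \<psi>] by (intro upper_sm_mono[OF \<mu>])
qed

end

context
  fixes D :: "'a::metric_space set" and f :: "'a \<Rightarrow> 'b::metric_space"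
  assumes cX: "compact (UNIV :: 'a set)" and cY: "compact (UNIV :: 'b set)"
    and odf: "od_map D f"
begin

lemma SMp_pushforward:
  assumes \<mu>: "SMp \<mu>"
  shows "SMp (pushforward D f \<mu>)"
proof -
  have dense: "closure D = UNIV" using odf by (simp add: od_map_def)
  note hom = pushforward_mult[OF cY dense \<mu>]
  have pos: "positive_sm (pushforward D f \<mu>)"
    unfolding positive_sm_def using pushforward_mono[OF cY dense \<mu>] by blast
  show ?thesis
    unfolding SMp_def strong_submeasure_def
  proof (intro conjI pos)
    show "\<forall>\<phi>1 \<phi>2. cfun \<phi>1 \<and> cfun \<phi>2 \<longrightarrow> pushforward D f \<mu> (\<lambda>x. \<phi>1 x + \<phi>2 x)
        \<le> pushforward D f \<mu> \<phi>1 + pushforward D f \<mu> \<phi>2"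
      using pushforward_add_le[OF cY dense \<mu>] by blast
    show "\<forall>\<phi> c. cfun \<phi> \<and> 0 \<le> c \<longrightarrow> pushforward D f \<mu> (\<lambda>x. c * \<phi> x) = c * pushforward D f \<mu> \<phi>"
      using hom by blast
    show "\<exists>C. \<forall>\<phi>. cfun \<phi> \<longrightarrow> \<bar>pushforward D f \<mu> \<phi>\<bar> \<le> C * supnorm \<phi>"
      using abs_le_max_const_supnorm[OF cY hom pos] by blast
  qed
qed

lemma smnorm_pushforward:
  assumes \<mu>: "SMp \<mu>"
  shows "smnorm (pushforward D f \<mu>) = smnorm \<mu>"
proof -
  have "closure D = UNIV" using odf by (simp add: od_map_def)
  then show ?thesis
    unfolding smnorm_SMp[OF cY SMp_pushforward[OF \<mu>]] smnorm_SMp[OF cX \<mu>]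
    by (simp add: pushforward_const[OF cY _ \<mu>])
qed

end

lemma pushforward_comp_le:
  fixes D :: "'a::metric_space set" and f :: "'a \<Rightarrow> 'b::metric_space"
    and D2 :: "'b set" and g :: "'b \<Rightarrow> 'c::metric_space"
  assumes cY: "compact (UNIV :: 'b set)" and cZ: "compact (UNIV :: 'c set)"
    and dense: "closure D = UNIV" and dense2: "closure D2 = UNIV" and denseU: "closure U = UNIV"
    and UD: "U \<subseteq> D" and fU: "f ` U \<subseteq> D2" and \<mu>: "SMp \<mu>"
  shows "sm_le (pushforward U (g \<circ> f) \<mu>) (pushforward D2 g (pushforward D f \<mu>))"
  unfolding sm_le_def
proof (intro allI impI)
  fix \<phi> :: "'c \<Rightarrow> real" assume \<phi>: "cfun \<phi>"
  show "pushforward U (g \<circ> f) \<mu> \<phi> \<le> pushforward D2 g (pushforward D f \<mu>) \<phi>"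
    unfolding pushforward_eq_upper_sm[of D2 g]
  proof (rule upper_sm_greatest[of _ "supnorm \<phi>"])
    show "pullback D2 g \<phi> y \<le> supnorm \<phi>" for y using abs_pullback_le[OF dense2 cZ \<phi>, of g y] by linarith
    fix \<eta> assume \<eta>: "cfun \<eta>" "\<forall>y. pullback D2 g \<phi> y \<le> \<eta> y"
    show "pushforward U (g \<circ> f) \<mu> \<phi> \<le> pushforward D f \<mu> \<eta>"
      unfolding pushforward_eq_upper_sm[of D f]
    proof (rule upper_sm_greatest[of _ "supnorm \<eta>"])
      show "pullback D f \<eta> x \<le> supnorm \<eta>" for x using abs_pullback_le[OF dense cY \<eta>(1), of f x] by linarith
      fix \<psi> assume \<psi>: "cfun \<psi>" "\<forall>x. pullback D f \<eta> x \<le> \<psi> x"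
      have "\<phi> (g (f x)) \<le> \<psi> x" if "x \<in> U" for x
      proof -
        have "\<phi> (g (f x)) = pullback D2 g \<phi> (f x)" using fU that by (simp add: pullback_on_domain image_subset_iff)
        also have "\<dots> \<le> \<eta> (f x)" using \<eta>(2) by blast
        also have "\<dots> = pullback D f \<eta> x" using UD that by (simp add: pullback_on_domain subset_iff)
        also have "\<dots> \<le> \<psi> x" using \<psi>(2) by blast
        finally show ?thesis .
      qed
      then have "pullback U (g \<circ> f) \<phi> x \<le> \<psi> x" for x
        unfolding pullback_altdef using abs_comp_le_supnorm[OF cZ \<phi>]
        by (intro Ext_le_cfun[OF denseU _ \<psi>(1)]) auto
      then show "pushforward U (g \<circ> f) \<mu> \<phi> \<le> \<mu> \<psi>"
        unfolding pushforward_eq_upper_sm using abs_pullback_le[OF denseU cZ \<phi>]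
        by (intro upper_sm_le_abs[OF \<mu> \<psi>(1)])
    qed
  qed
qed

lemma pushforward_continuous:
  fixes f :: "'a::metric_space \<Rightarrow> 'b::metric_space"
  assumes cX: "compact (UNIV :: 'a set)" and f: "continuous_on UNIV f"
    and \<mu>: "SMp \<mu>" and \<phi>: "cfun \<phi>"
  shows "pushforward UNIV f \<mu> \<phi> = \<mu> (\<lambda>x. \<phi> (f x))"
  unfolding pushforward_eq_upper_sm pullback_UNIV by (rule upper_sm_cfun[OF \<mu> cX cfun_compose[OF f \<phi>]])

text \<open>The pullback along \<open>g \<circ> f\<close> extends from the dense set \<open>U\<close> to the continuous function
  \<open>\<phi> \<circ> g \<circ> f\<close>, whatever \<open>U\<close> is.\<close>

lemma pushforward_comp_eq:
  fixes f :: "'a::metric_space \<Rightarrow> 'b::metric_space" and g :: "'b \<Rightarrow> 'c::metric_space"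
  assumes cX: "compact (UNIV :: 'a set)" and cY: "compact (UNIV :: 'b set)"
    and cZ: "compact (UNIV :: 'c set)"
    and f: "continuous_on UNIV f" and g: "continuous_on UNIV g" and denseU: "closure U = UNIV"
    and \<mu>: "SMp \<mu>" and \<phi>: "cfun \<phi>"
  shows "pushforward UNIV g (pushforward UNIV f \<mu>) \<phi> = pushforward U (g \<circ> f) \<mu> \<phi>"
proof -
  have \<phi>gf: "cfun (\<lambda>x. \<phi> (g (f x)))" using cfun_compose[OF f cfun_compose[OF g \<phi>]] .
  have pb: "pullback U (g \<circ> f) \<phi> = (\<lambda>x. \<phi> (g (f x)))"
    unfolding pullback_altdef using abs_comp_le_supnorm[OF cZ \<phi>]
    by (intro ext Ext_eq_cfun[OF denseU _ \<phi>gf]) auto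
  have "SMp (pushforward UNIV f \<mu>)"
    using SMp_pushforward[OF cX cY _ \<mu>] f by (simp add: od_map_def)
  then have "pushforward UNIV g (pushforward UNIV f \<mu>) \<phi> = pushforward UNIV f \<mu> (\<lambda>y. \<phi> (g y))"
    by (rule pushforward_continuous[OF cY g _ \<phi>])
  also have "\<dots> = \<mu> (\<lambda>x. \<phi> (g (f x)))"
    by (rule pushforward_continuous[OF cX f \<mu> cfun_compose[OF g \<phi>]])
  also have "\<dots> = pushforward U (g \<circ> f) \<mu> \<phi>"
    unfolding pushforward_eq_upper_sm pb by (rule upper_sm_cfun[OF \<mu> cX \<phi>gf, symmetric])
  finally show ?thesis .
qed

lemma pushforward_add_ge:
  fixes D :: "'a::metric_space set" and f :: "'a \<Rightarrow> 'b::metric_space"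
  assumes cY: "compact (UNIV :: 'b set)" and dense: "closure D = UNIV"
    and \<mu>1: "SMp \<mu>1" and \<mu>2: "SMp \<mu>2"
  shows "sm_le (\<lambda>\<phi>. pushforward D f \<mu>1 \<phi> + pushforward D f \<mu>2 \<phi>) (pushforward D f (\<lambda>\<phi>. \<mu>1 \<phi> + \<mu>2 \<phi>))"
  unfolding sm_le_def
proof (intro allI impI)
  fix \<phi> :: "'b \<Rightarrow> real" assume \<phi>: "cfun \<phi>"
  show "pushforward D f \<mu>1 \<phi> + pushforward D f \<mu>2 \<phi> \<le> pushforward D f (\<lambda>\<phi>. \<mu>1 \<phi> + \<mu>2 \<phi>) \<phi>"
    unfolding pushforward_eq_upper_sm
  proof (rule upper_sm_greatest[of _ "supnorm \<phi>"])
    show "pullback D f \<phi> x \<le> supnorm \<phi>" for x using abs_pullback_le[OF dense cY \<phi>, of f x] by linarith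
    fix \<psi> assume \<psi>: "cfun \<psi>" "\<forall>x. pullback D f \<phi> x \<le> \<psi> x"
    have "upper_sm \<mu>1 (pullback D f \<phi>) \<le> \<mu>1 \<psi>" "upper_sm \<mu>2 (pullback D f \<phi>) \<le> \<mu>2 \<psi>"
      using \<psi> abs_pullback_le[OF dense cY \<phi>, of f]
      by (auto intro: upper_sm_le_abs[OF \<mu>1] upper_sm_le_abs[OF \<mu>2])
    then show "upper_sm \<mu>1 (pullback D f \<phi>) + upper_sm \<mu>2 (pullback D f \<phi>) \<le> \<mu>1 \<psi> + \<mu>2 \<psi>"
      by (rule add_mono)
  qed
qed

section \<open>Weak limits\<close>

lemma abs_le_smnorm_supnorm:
  fixes \<mu> :: "('a::metric_space \<Rightarrow> real) \<Rightarrow> real"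
  assumes cX: "compact (UNIV :: 'a set)" and \<mu>: "SMp \<mu>" and \<phi>: "cfun \<phi>"
  shows "\<bar>\<mu> \<phi>\<bar> \<le> smnorm \<mu> * supnorm \<phi>"
  unfolding smnorm_SMp[OF cX \<mu>]
  by (rule abs_le_max_const_supnorm[OF cX SMp_mult[OF \<mu>] _ \<phi>]) (use \<mu> in \<open>simp_all add: SMp_def\<close>)

lemma SMp_weak_limit:
  fixes \<mu>s :: "nat \<Rightarrow> ('a::metric_space \<Rightarrow> real) \<Rightarrow> real"
  assumes cX: "compact (UNIV :: 'a set)" and \<mu>s: "\<And>n. SMp (\<mu>s n)" and conv: "sm_weak_conv \<mu>s \<mu>"
  shows "SMp \<mu>"
proof -
  obtain B where B: "\<And>n. smnorm (\<mu>s n) \<le> B" using conv unfolding sm_weak_conv_def by blast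
  have L: "\<And>\<phi>. cfun \<phi> \<Longrightarrow> (\<lambda>n. \<mu>s n \<phi>) \<longlonglongrightarrow> \<mu> \<phi>" using conv unfolding sm_weak_conv_def by blast
  have add: "\<mu> (\<lambda>x. \<phi>1 x + \<phi>2 x) \<le> \<mu> \<phi>1 + \<mu> \<phi>2" if \<phi>: "cfun \<phi>1" "cfun \<phi>2" for \<phi>1 \<phi>2
  proof (rule LIMSEQ_le[OF L tendsto_add[OF L L]])
    show "\<exists>N. \<forall>n\<ge>N. \<mu>s n (\<lambda>x. \<phi>1 x + \<phi>2 x) \<le> \<mu>s n \<phi>1 + \<mu>s n \<phi>2"
      using SMp_add[OF \<mu>s \<phi>] by blast
  qed (use \<phi> in auto)
  have hom: "\<mu> (\<lambda>x. c * \<phi> x) = c * \<mu> \<phi>" if \<phi>: "cfun \<phi>" "c \<ge> 0" for \<phi> c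
  proof (rule LIMSEQ_unique[OF L])
    show "cfun (\<lambda>x. c * \<phi> x)" using \<phi> by blast
    have "(\<lambda>n. \<mu>s n (\<lambda>x. c * \<phi> x)) = (\<lambda>n. c * \<mu>s n \<phi>)" using SMp_mult[OF \<mu>s \<phi>] by simp
    then show "(\<lambda>n. \<mu>s n (\<lambda>x. c * \<phi> x)) \<longlonglongrightarrow> c * \<mu> \<phi>"
      using tendsto_mult_left[OF L[OF \<phi>(1)]] by simp
  qed
  have mono: "\<mu> \<phi> \<le> \<mu> \<psi>" if \<phi>: "cfun \<phi>" "cfun \<psi>" "\<forall>x. \<phi> x \<le> \<psi> x" for \<phi> \<psi>
  proof (rule LIMSEQ_le[OF L[OF \<phi>(1)] L[OF \<phi>(2)]])
    show "\<exists>N. \<forall>n\<ge>N. \<mu>s n \<phi> \<le> \<mu>s n \<psi>" using SMp_mono[OF \<mu>s \<phi>(1,2)] \<phi>(3) by blast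
  qed
  have bound: "\<bar>\<mu> \<phi>\<bar> \<le> B * supnorm \<phi>" if \<phi>: "cfun \<phi>" for \<phi>
  proof (rule LIMSEQ_le_const2[OF tendsto_rabs[OF L[OF \<phi>]]])
    have "\<bar>\<mu>s n \<phi>\<bar> \<le> B * supnorm \<phi>" for n
      using abs_le_smnorm_supnorm[OF cX \<mu>s \<phi>] mult_right_mono[OF B supnorm_nonneg[OF cX \<phi>]]
      by (rule order_trans)
    then show "\<exists>N. \<forall>n\<ge>N. \<bar>\<mu>s n \<phi>\<bar> \<le> B * supnorm \<phi>" by blast
  qed
  have "strong_submeasure \<mu>" unfolding strong_submeasure_def using add hom bound by blast
  moreover have "positive_sm \<mu>" unfolding positive_sm_def using mono by blast
  ultimately show ?thesis by (simp add: SMp_def)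
qed

lemma weak_cluster_point_le_pushforward:
  fixes D :: "'a::metric_space set" and f :: "'a \<Rightarrow> 'b::metric_space"
  assumes cY: "compact (UNIV :: 'b set)" and dense: "closure D = UNIV"
    and \<mu>s: "\<And>n. SMp (\<mu>s n)" and conv: "sm_weak_conv \<mu>s \<mu>"
    and cluster: "weak_cluster_point (\<lambda>n. pushforward D f (\<mu>s n)) \<nu>"
  shows "sm_le \<nu> (pushforward D f \<mu>)"
  unfolding sm_le_def
proof (intro allI impI)
  fix \<phi> :: "'b \<Rightarrow> real" assume \<phi>: "cfun \<phi>"
  obtain r where r: "strict_mono r" "sm_weak_conv ((\<lambda>n. pushforward D f (\<mu>s n)) \<circ> r) \<nu>"
    using cluster unfolding weak_cluster_point_def by blast
  have \<nu>: "(\<lambda>n. pushforward D f (\<mu>s (r n)) \<phi>) \<longlonglongrightarrow> \<nu> \<phi>"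
    using r(2) \<phi> unfolding sm_weak_conv_def by (simp add: o_def)
  show "\<nu> \<phi> \<le> pushforward D f \<mu> \<phi>" unfolding pushforward_eq_upper_sm
  proof (rule upper_sm_greatest[of _ "supnorm \<phi>"])
    show "pullback D f \<phi> x \<le> supnorm \<phi>" for x using abs_pullback_le[OF dense cY \<phi>, of f x] by linarith
    fix \<psi> assume \<psi>: "cfun \<psi>" "\<forall>x. pullback D f \<phi> x \<le> \<psi> x"
    have "(\<lambda>n. \<mu>s n \<psi>) \<longlonglongrightarrow> \<mu> \<psi>" using conv \<psi>(1) unfolding sm_weak_conv_def by blast
    then have "(\<lambda>n. \<mu>s (r n) \<psi>) \<longlonglongrightarrow> \<mu> \<psi>"
      using LIMSEQ_subseq_LIMSEQ[OF _ r(1)] by (simp add: o_def)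
    moreover have "pushforward D f (\<mu>s (r n)) \<phi> \<le> \<mu>s (r n) \<psi>" for n
      unfolding pushforward_eq_upper_sm using \<psi> abs_pullback_le[OF dense cY \<phi>]
      by (intro upper_sm_le_abs[OF \<mu>s]) auto
    ultimately show "\<nu> \<phi> \<le> \<mu> \<psi>" by (intro LIMSEQ_le[OF \<nu>]) auto
  qed
qed

lemma sm_weak_conv_pushforward:
  fixes f :: "'a::metric_space \<Rightarrow> 'b::metric_space"
  assumes cX: "compact (UNIV :: 'a set)" and cY: "compact (UNIV :: 'b set)"
    and f: "continuous_on UNIV f" and \<mu>s: "\<And>n. SMp (\<mu>s n)" and conv: "sm_weak_conv \<mu>s \<mu>"
  shows "sm_weak_conv (\<lambda>n. pushforward UNIV f (\<mu>s n)) (pushforward UNIV f \<mu>)"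
proof -
  have \<mu>: "SMp \<mu>" by (rule SMp_weak_limit[OF cX \<mu>s conv])
  have odf: "od_map UNIV f" using f by (simp add: od_map_def)
  show ?thesis
    unfolding sm_weak_conv_def
  proof (intro conjI allI impI)
    show "\<exists>B. \<forall>n. smnorm (pushforward UNIV f (\<mu>s n)) \<le> B"
      using conv unfolding sm_weak_conv_def smnorm_pushforward[OF cX cY odf \<mu>s] by blast
    fix \<phi> :: "'b \<Rightarrow> real" assume \<phi>: "cfun \<phi>"
    show "(\<lambda>n. pushforward UNIV f (\<mu>s n) \<phi>) \<longlonglongrightarrow> pushforward UNIV f \<mu> \<phi>"
      using conv cfun_compose[OF f \<phi>]
      unfolding sm_weak_conv_def pushforward_continuous[OF cX f \<mu>s \<phi>] pushforward_continuous[OF cX f \<mu> \<phi>]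
      by blast
  qed
qed

section \<open>Pushforward of a measure\<close>

lemma fin_borel_measure_space: "fin_borel_measure M \<Longrightarrow> space M = UNIV"
  unfolding fin_borel_measure_def by (metis sets_eq_imp_space_eq space_borel)

lemma fin_borel_measure_measurable:
  assumes "fin_borel_measure M" "g \<in> borel_measurable borel"
  shows "g \<in> borel_measurable M"
proof -
  have "sets M = sets borel" using assms(1) by (simp add: fin_borel_measure_def)
  then show ?thesis using assms(2) measurable_cong_sets[of M borel borel borel] by simp
qed

lemma cfun_borel_measurable:
  assumes "fin_borel_measure M" "cfun \<psi>"
  shows "\<psi> \<in> borel_measurable M"
  using assms by (simp add: fin_borel_measure_measurable borel_measurable_continuous_onI cfun_def)

lemma integrable_cfun:
  fixes M :: "'a::metric_space measure"
  assumes cX: "compact (UNIV::'a set)" and M: "fin_borel_measure M" and \<psi>: "cfun \<psi>"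
  shows "integrable M \<psi>"
proof (rule finite_measure.integrable_const_bound[where B="supnorm \<psi>"])
  show "finite_measure M" using M by (simp add: fin_borel_measure_def)
  show "AE x in M. norm (\<psi> x) \<le> supnorm \<psi>" using abs_le_supnorm[OF cX \<psi>] by simp
qed (rule cfun_borel_measurable[OF M \<psi>])

lemma SMp_meas_sm:
  fixes M :: "'a::metric_space measure"
  assumes cX: "compact (UNIV::'a set)" and M: "fin_borel_measure M"
  shows "SMp (meas_sm M)"
  unfolding SMp_def strong_submeasure_def positive_sm_def meas_sm_def
proof (intro conjI allI impI; (elim conjE)?)
  fix \<phi>1 \<phi>2 :: "'a \<Rightarrow> real" assume "cfun \<phi>1" "cfun \<phi>2"
  then show "(LINT x|M. \<phi>1 x + \<phi>2 x) \<le> integral\<^sup>L M \<phi>1 + integral\<^sup>L M \<phi>2"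
    using integrable_cfun[OF cX M] by simp
next
  fix \<phi> :: "'a \<Rightarrow> real" and c :: real
  show "(LINT x|M. c * \<phi> x) = c * integral\<^sup>L M \<phi>" by simp
next
  fix \<phi> \<psi> :: "'a \<Rightarrow> real" assume "cfun \<phi>" "cfun \<psi>" "\<forall>x. \<phi> x \<le> \<psi> x"
  then show "integral\<^sup>L M \<phi> \<le> integral\<^sup>L M \<psi>"
    using integrable_cfun[OF cX M] by (intro integral_mono) auto
next
  show "\<exists>C. \<forall>\<phi>. cfun \<phi> \<longrightarrow> \<bar>integral\<^sup>L M \<phi>\<bar> \<le> C * supnorm \<phi>"
  proof (intro exI allI impI)
    fix \<phi> :: "'a \<Rightarrow> real" assume \<phi>: "cfun \<phi>"
    have "\<bar>integral\<^sup>L M \<phi>\<bar> \<le> (LINT x|M. \<bar>\<phi> x\<bar>)"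
      using integral_norm_bound[of M \<phi>] by simp
    also have "\<dots> \<le> (LINT x|M. supnorm \<phi>)"
      using integrable_cfun[OF cX M] \<phi> abs_le_supnorm[OF cX \<phi>] by (intro integral_mono) auto
    also have "\<dots> = measure M UNIV * supnorm \<phi>" using fin_borel_measure_space[OF M] by simp
    finally show "\<bar>integral\<^sup>L M \<phi>\<bar> \<le> measure M UNIV * supnorm \<phi>" .
  qed
qed

text \<open>The upper Pasch--Hausdorff envelope of \<open>h\<close>.\<close>

definition lip_envelope :: "('a::metric_space \<Rightarrow> real) \<Rightarrow> real \<Rightarrow> 'a \<Rightarrow> real" where
  "lip_envelope h k x = (SUP y. h y - k * dist x y)"

context
  fixes h :: "'a::metric_space \<Rightarrow> real" and s k :: real
  assumes h: "\<And>y. \<bar>h y\<bar> \<le> s" and k: "k \<ge> 0"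
begin

lemma lip_envelope_term_le: "h y - k * dist x y \<le> s"
  using h[of y] k zero_le_dist[of x y] by (smt (verit) mult_nonneg_nonneg)

lemma lip_envelope_upper: "h y - k * dist x y \<le> lip_envelope h k x"
  unfolding lip_envelope_def
  by (rule cSUP_upper[OF UNIV_I], rule bdd_aboveI2[where M=s], rule lip_envelope_term_le)

lemma lip_envelope_ge: "h x \<le> lip_envelope h k x"
  using lip_envelope_upper[of x x] by simp

lemma abs_lip_envelope_le: "\<bar>lip_envelope h k x\<bar> \<le> s"
proof -
  have "lip_envelope h k x \<le> s"
    unfolding lip_envelope_def by (intro cSUP_least lip_envelope_term_le) simp
  then show ?thesis using lip_envelope_ge[of x] h[of x] by (simp add: abs_le_iff)
qed

lemma lip_envelope_le_shift: "lip_envelope h k x \<le> lip_envelope h k x' + k * dist x x'"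
proof -
  have "h y - k * dist x y \<le> lip_envelope h k x' + k * dist x x'" for y
  proof -
    have "k * dist x' y \<le> k * dist x x' + k * dist x y"
      using dist_triangle[of x' y x] k by (metis dist_commute distrib_left mult_left_mono)
    then show ?thesis using lip_envelope_upper[of y x'] by linarith
  qed
  then show ?thesis unfolding lip_envelope_def[of h k x] by (intro cSUP_least) auto
qed

lemma cfun_lip_envelope: "cfun (lip_envelope h k)"
  unfolding cfun_def
proof (rule lipschitz_on_continuous_on)
  show "k-lipschitz_on UNIV (lip_envelope h k)"
    unfolding lipschitz_on_def
  proof (intro conjI ballI k)
    fix x y :: 'a
    show "dist (lip_envelope h k x) (lip_envelope h k y) \<le> k * dist x y"
      using lip_envelope_le_shift[of x y] lip_envelope_le_shift[of y x]
      by (simp add: dist_real_def dist_commute abs_le_iff)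
  qed
qed

end

lemma lip_envelope_tendsto:
  fixes h :: "'a::metric_space \<Rightarrow> real"
  assumes h: "\<And>y. \<bar>h y\<bar> \<le> s"
    and usc: "\<And>\<epsilon>. \<epsilon> > 0 \<Longrightarrow> \<exists>d>0. \<forall>y. dist x y < d \<longrightarrow> h y \<le> h x + \<epsilon>"
  shows "(\<lambda>n. lip_envelope h (real n) x) \<longlonglongrightarrow> h x"
  unfolding lim_sequentially
proof (intro allI impI)
  fix r :: real assume r: "r > 0"
  obtain d where d: "d > 0" "\<forall>y. dist x y < d \<longrightarrow> h y \<le> h x + r/2" using usc[of "r/2"] r by auto
  obtain N :: nat where N: "real N \<ge> 2 * s / d" using real_arch_simple by blast
  have "dist (lip_envelope h (real n) x) (h x) < r" if n: "N \<le> n" for n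
  proof -
    have "2 * s / d \<le> real n" using N n by linarith
    then have nd: "2 * s \<le> real n * d" using d(1) by (simp add: field_simps)
    have "h y - real n * dist x y \<le> h x + r / 2" for y
    proof (cases "dist x y < d")
      case True
      then show ?thesis using d(2) by (smt (verit) mult_nonneg_nonneg of_nat_0_le_iff zero_le_dist)
    next
      case False
      then have "real n * d \<le> real n * dist x y" by (intro mult_left_mono) auto
      then show ?thesis using nd h[of x] h[of y] r by (simp add: abs_le_iff)
    qed
    then have "lip_envelope h (real n) x \<le> h x + r / 2"
      unfolding lip_envelope_def by (intro cSUP_least) auto
    then show ?thesis using lip_envelope_ge[of h s "real n", OF h of_nat_0_le_iff] r by (simp add: dist_real_def)
  qed
  then show "\<exists>N. \<forall>n\<ge>N. dist (lip_envelope h (real n) x) (h x) < r" by blast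
qed

context
  fixes M :: "'a::metric_space measure" and h g :: "'a \<Rightarrow> real" and s :: real
  assumes cX: "compact (UNIV :: 'a set)" and M: "fin_borel_measure M"
    and h: "\<And>x. \<bar>h x\<bar> \<le> s" and g: "integrable M g"
begin

lemma integral_le_upper_sm_meas_sm:
  assumes le: "AE x in M. g x \<le> h x"
  shows "integral\<^sup>L M g \<le> upper_sm (meas_sm M) h"
proof (rule upper_sm_greatest[of _ s])
  show "h x \<le> s" for x using h[of x] by linarith
  fix \<psi> assume \<psi>: "cfun \<psi>" "\<forall>x. h x \<le> \<psi> x"
  have "AE x in M. g x \<le> \<psi> x" using le by eventually_elim (use \<psi> in \<open>auto intro: order_trans\<close>)
  then show "integral\<^sup>L M g \<le> meas_sm M \<psi>"
    unfolding meas_sm_def by (rule integral_mono_AE[OF g integrable_cfun[OF cX M \<open>cfun \<psi>\<close>]])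
qed

lemma upper_sm_meas_sm_le_integral:
  assumes lim: "AE x in M. (\<lambda>n. lip_envelope h (real n) x) \<longlonglongrightarrow> g x"
  shows "upper_sm (meas_sm M) h \<le> integral\<^sup>L M g"
proof (rule LIMSEQ_le_const)
  have env: "cfun (lip_envelope h (real n))" "\<bar>lip_envelope h (real n) x\<bar> \<le> s" for n x
    using cfun_lip_envelope[of h s "real n", OF h of_nat_0_le_iff] abs_lip_envelope_le[of h s "real n", OF h of_nat_0_le_iff] by auto
  show "(\<lambda>n. integral\<^sup>L M (lip_envelope h (real n))) \<longlonglongrightarrow> integral\<^sup>L M g"
  proof (rule integral_dominated_convergence[where w="\<lambda>x. s"])
    show "integrable M (\<lambda>x. s)"
      using M by (simp add: fin_borel_measure_def finite_measure.integrable_const)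
  qed (use g lim env cfun_borel_measurable[OF M] in auto)
  have "upper_sm (meas_sm M) h \<le> integral\<^sup>L M (lip_envelope h (real n))" for n
    unfolding meas_sm_def[symmetric]
    using lip_envelope_ge[of h s "real n", OF h of_nat_0_le_iff] env(1) h by (intro upper_sm_le_abs[OF SMp_meas_sm[OF cX M]])
  then show "\<exists>N. \<forall>n\<ge>N. upper_sm (meas_sm M) h \<le> integral\<^sup>L M (lip_envelope h (real n))" by blast
qed

end

lemma pullback_approachable:
  fixes f :: "'a::metric_space \<Rightarrow> 'b::metric_space"
  assumes D: "open D" and f: "continuous_on D f" and \<phi>: "cfun \<phi>" and x: "x \<in> D" and \<epsilon>: "\<epsilon> > 0"
  shows "\<exists>d>0. \<forall>y. dist x y < d \<longrightarrow> \<bar>pullback D f \<phi> y - pullback D f \<phi> x\<bar> < \<epsilon>"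
proof -
  have "continuous_on D (\<lambda>x. \<phi> (f x))"
    using \<phi> f unfolding cfun_def by (metis continuous_on_compose2 subset_UNIV)
  then obtain d1 where d1: "d1 > 0" "\<forall>y\<in>D. dist y x < d1 \<longrightarrow> dist (\<phi> (f y)) (\<phi> (f x)) < \<epsilon>"
    using x \<epsilon> unfolding continuous_on_iff by blast
  obtain d2 where d2: "d2 > 0" "ball x d2 \<subseteq> D" using D x open_contains_ball by meson
  have "\<bar>pullback D f \<phi> y - pullback D f \<phi> x\<bar> < \<epsilon>" if "dist x y < min d1 d2" for y
  proof -
    have "y \<in> D" using d2 that by (auto simp: subset_iff)
    then show ?thesis
      using d1 that x by (simp add: pullback_on_domain dist_real_def dist_commute)
  qed
  then show ?thesis using d1(1) d2(1) by (intro exI[of _ "min d1 d2"]) auto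
qed

lemma pushforward_meas_sm:
  fixes D :: "'a::metric_space set" and f :: "'a \<Rightarrow> 'b::metric_space"
  assumes cX: "compact (UNIV :: 'a set)" and cY: "compact (UNIV :: 'b set)"
    and odf: "od_map D f" and M: "fin_borel_measure M" and null: "emeasure M (UNIV - D) = 0"
    and \<phi>: "cfun \<phi>"
  shows "pushforward D f (meas_sm M) \<phi> = (LINT x:D|M. \<phi> (f x))"
proof -
  have dense: "closure D = UNIV" and D: "open D" and f: "continuous_on D f"
    using odf by (auto simp: od_map_def)
  define h where "h = pullback D f \<phi>"
  define g where "g = (\<lambda>x. indicator D x *\<^sub>R \<phi> (f x))"
  have h: "\<bar>h x\<bar> \<le> supnorm \<phi>" for x unfolding h_def by (rule abs_pullback_le[OF dense cY \<phi>])
  have AE_D: "AE x in M. x \<in> D"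
    using M D null by (intro AE_I'[of "UNIV - D"]) (auto simp: fin_borel_measure_def null_sets_def
        fin_borel_measure_space)
  have "g \<in> borel_measurable borel"
    unfolding g_def using D continuous_on_compose2[OF _ f, of UNIV \<phi>] \<phi>
    by (intro borel_measurable_continuous_on_indicator) (auto simp: cfun_def)
  then have "g \<in> borel_measurable M" by (rule fin_borel_measure_measurable[OF M])
  then have g: "integrable M g"
    using M abs_le_supnorm[OF cY \<phi>] supnorm_nonneg[OF cY \<phi>]
    by (intro finite_measure.integrable_const_bound[where B="supnorm \<phi>"])
      (auto simp: fin_borel_measure_def g_def indicator_def)
  have gh: "AE x in M. g x = h x" using AE_D by eventually_elim (simp add: g_def h_def pullback_on_domain)
  moreover have "AE x in M. (\<lambda>n. lip_envelope h (real n) x) \<longlonglongrightarrow> h x"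
    using AE_D
  proof eventually_elim
    case (elim x)
    show ?case unfolding h_def
      using pullback_approachable[OF D f \<phi> elim]
      by (intro lip_envelope_tendsto[OF abs_pullback_le[OF dense cY \<phi>]]) (force simp: abs_less_iff)
  qed
  ultimately have "AE x in M. (\<lambda>n. lip_envelope h (real n) x) \<longlonglongrightarrow> g x"
    by eventually_elim simp
  moreover have "AE x in M. g x \<le> h x" using gh by eventually_elim simp
  ultimately have "upper_sm (meas_sm M) h = integral\<^sup>L M g"
    by (intro antisym upper_sm_meas_sm_le_integral[OF cX M h g] integral_le_upper_sm_meas_sm[OF cX M h g])
  then show ?thesis by (simp add: pushforward_eq_upper_sm h_def g_def set_lebesgue_integral_def mult.commute)
qed

section \<open>The Hahn--Banach theorem\<close>

text \<open>Linear functionals dominated by \<open>p\<close> on subspaces of \<open>W\<close> are represented by their graphs, so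
  that Zorn's lemma can be applied to the inclusion order.\<close>

definition dominated_graph :: "('a \<Rightarrow> real) set \<Rightarrow> (('a \<Rightarrow> real) \<Rightarrow> real) \<Rightarrow> (('a \<Rightarrow> real) \<times> real) set \<Rightarrow> bool" where
  "dominated_graph W p G \<longleftrightarrow> G \<noteq> {} \<and>
     (\<forall>x a. (x, a) \<in> G \<longrightarrow> x \<in> W \<and> a \<le> p x) \<and>
     (\<forall>x a y b. (x, a) \<in> G \<longrightarrow> (y, b) \<in> G \<longrightarrow> ((\<lambda>t. x t + y t), a + b) \<in> G) \<and>
     (\<forall>x a c. (x, a) \<in> G \<longrightarrow> ((\<lambda>t. c * x t), c * a) \<in> G) \<and>
     (\<forall>x a b. (x, a) \<in> G \<longrightarrow> (x, b) \<in> G \<longrightarrow> a = b)"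

definition graph_extend :: "(('a \<Rightarrow> real) \<times> real) set \<Rightarrow> ('a \<Rightarrow> real) \<Rightarrow> real \<Rightarrow> (('a \<Rightarrow> real) \<times> real) set" where
  "graph_extend G x0 \<alpha> = {((\<lambda>t. y t + c * x0 t), a + c * \<alpha>) | y a c. (y, a) \<in> G}"

lemma graph_extendI:
  "(y, a) \<in> G \<Longrightarrow> x = (\<lambda>t. y t + c * x0 t) \<Longrightarrow> b = a + c * \<alpha> \<Longrightarrow> (x, b) \<in> graph_extend G x0 \<alpha>"
  unfolding graph_extend_def by blast

locale sublinear_functional =
  fixes W :: "('a \<Rightarrow> real) set" and p :: "('a \<Rightarrow> real) \<Rightarrow> real"
  assumes W_add: "\<And>x y. x \<in> W \<Longrightarrow> y \<in> W \<Longrightarrow> (\<lambda>t. x t + y t) \<in> W"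
    and W_scale: "\<And>x c. x \<in> W \<Longrightarrow> (\<lambda>t. c * x t) \<in> W"
    and p_add: "\<And>x y. x \<in> W \<Longrightarrow> y \<in> W \<Longrightarrow> p (\<lambda>t. x t + y t) \<le> p x + p y"
    and p_scale: "\<And>x c. x \<in> W \<Longrightarrow> c > 0 \<Longrightarrow> p (\<lambda>t. c * x t) = c * p x"
begin

context
  fixes G assumes G: "dominated_graph W p G"
begin

lemma dominated_graph_in: "(x, a) \<in> G \<Longrightarrow> x \<in> W"
  and dominated_graph_le: "(x, a) \<in> G \<Longrightarrow> a \<le> p x"
  and dominated_graph_add: "(x, a) \<in> G \<Longrightarrow> (y, b) \<in> G \<Longrightarrow> ((\<lambda>t. x t + y t), a + b) \<in> G"
  and dominated_graph_scale: "(x, a) \<in> G \<Longrightarrow> ((\<lambda>t. c * x t), c * a) \<in> G"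
  and dominated_graph_unique: "(x, a) \<in> G \<Longrightarrow> (x, b) \<in> G \<Longrightarrow> a = b"
  using G unfolding dominated_graph_def by blast+

lemma dominated_graph_zero: "((\<lambda>t. 0), 0) \<in> G"
proof -
  obtain x a where "(x, a) \<in> G" using G unfolding dominated_graph_def by auto
  from dominated_graph_scale[OF this, of 0] show ?thesis by simp
qed

text \<open>The one-step extension to \<open>x0\<close> is possible because \<open>a - p (y - x0) \<le> p (z + x0) - b\<close> for
  all \<open>(y, a), (z, b) \<in> G\<close>, by subadditivity of \<open>p\<close>; any \<open>\<alpha>\<close> in between works.\<close>

lemma exists_extension_value:
  assumes x0: "x0 \<in> W"
  shows "\<exists>\<alpha>. (\<forall>y a. (y, a) \<in> G \<longrightarrow> a - p (\<lambda>t. y t + (-1) * x0 t) \<le> \<alpha>) \<and>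
             (\<forall>y a. (y, a) \<in> G \<longrightarrow> \<alpha> \<le> p (\<lambda>t. y t + x0 t) - a)"
proof -
  define S where "S = {a - p (\<lambda>t. y t + (-1) * x0 t) | y a. (y, a) \<in> G}"
  have key: "a1 - p (\<lambda>t. y1 t + (-1) * x0 t) \<le> p (\<lambda>t. y2 t + x0 t) - a2"
    if "(y1, a1) \<in> G" "(y2, a2) \<in> G" for y1 a1 y2 a2
  proof -
    have "y1 \<in> W" "y2 \<in> W" using that dominated_graph_in by auto
    then have W: "(\<lambda>t. y1 t + (-1) * x0 t) \<in> W" "(\<lambda>t. y2 t + x0 t) \<in> W"
      using W_add[OF _ W_scale[OF x0, of "-1"]] W_add[OF _ x0] by simp_all
    have "a1 + a2 \<le> p (\<lambda>t. y1 t + y2 t)" using dominated_graph_le[OF dominated_graph_add[OF that]] .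
    also have "(\<lambda>t. y1 t + y2 t) = (\<lambda>t. (y1 t + (-1) * x0 t) + (y2 t + x0 t))" by auto
    also have "p \<dots> \<le> p (\<lambda>t. y1 t + (-1) * x0 t) + p (\<lambda>t. y2 t + x0 t)" using p_add[OF W] by simp
    finally show ?thesis by simp
  qed
  have ne: "S \<noteq> {}" using dominated_graph_zero unfolding S_def by blast
  have bdd: "bdd_above S"
    unfolding S_def using key[OF _ dominated_graph_zero] by (intro bdd_aboveI[where M="p x0"]) auto
  have "a - p (\<lambda>t. y t + (-1) * x0 t) \<le> Sup S" if "(y, a) \<in> G" for y a
    using that by (intro cSup_upper[OF _ bdd]) (auto simp: S_def)
  moreover have "Sup S \<le> p (\<lambda>t. y t + x0 t) - a" if "(y, a) \<in> G" for y a
    using key[OF _ that] by (intro cSup_least[OF ne]) (auto simp: S_def)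
  ultimately show ?thesis by blast
qed

context
  fixes x0 \<alpha>
  assumes x0: "x0 \<in> W" and new: "\<forall>a. (x0, a) \<notin> G"
    and \<alpha>_ge: "\<And>y a. (y, a) \<in> G \<Longrightarrow> a - p (\<lambda>t. y t + (-1) * x0 t) \<le> \<alpha>"
    and \<alpha>_le: "\<And>y a. (y, a) \<in> G \<Longrightarrow> \<alpha> \<le> p (\<lambda>t. y t + x0 t) - a"
begin

lemma graph_extend_dominated:
  assumes ya: "(y, a) \<in> G"
  shows "a + c * \<alpha> \<le> p (\<lambda>t. y t + c * x0 t)"
proof -
  have yW: "y \<in> W" by (rule dominated_graph_in[OF ya])
  consider "c = 0" | "c > 0" | "c < 0" by linarith
  then show ?thesis
  proof cases
    case 1 then show ?thesis using dominated_graph_le[OF ya] by simp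
  next
    case 2
    from \<alpha>_le[OF dominated_graph_scale[OF ya, of "1/c"]]
    have "c * \<alpha> \<le> c * p (\<lambda>t. (1/c) * y t + x0 t) - a" using 2 by (simp add: field_simps)
    also have "c * p (\<lambda>t. (1/c) * y t + x0 t) = p (\<lambda>t. c * ((1/c) * y t + x0 t))"
      using yW by (intro p_scale[symmetric] W_add W_scale x0 2)
    also have "(\<lambda>t. c * ((1/c) * y t + x0 t)) = (\<lambda>t. y t + c * x0 t)"
      using 2 by (auto simp: field_simps)
    finally show ?thesis by simp
  next
    case 3
    define d where "d = - c"
    have d: "d > 0" using 3 by (simp add: d_def)
    from \<alpha>_ge[OF dominated_graph_scale[OF ya, of "1/d"]]
    have "a - d * \<alpha> \<le> d * p (\<lambda>t. (1/d) * y t + (-1) * x0 t)" using d by (simp add: field_simps)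
    also have "d * p (\<lambda>t. (1/d) * y t + (-1) * x0 t) = p (\<lambda>t. d * ((1/d) * y t + (-1) * x0 t))"
      using yW by (intro p_scale[symmetric] W_add W_scale x0 d)
    also have "(\<lambda>t. d * ((1/d) * y t + (-1) * x0 t)) = (\<lambda>t. y t + c * x0 t)"
      using d by (auto simp: field_simps d_def)
    finally show ?thesis by (simp add: d_def)
  qed
qed

lemma graph_extend_unique:
  assumes "(x, a) \<in> graph_extend G x0 \<alpha>" "(x, b) \<in> graph_extend G x0 \<alpha>"
  shows "a = b"
proof -
  obtain x1 a1 c1 y1 b1 c2 where
    e: "x = (\<lambda>t. x1 t + c1 * x0 t)" "a = a1 + c1 * \<alpha>" "(x1, a1) \<in> G"
       "x = (\<lambda>t. y1 t + c2 * x0 t)" "b = b1 + c2 * \<alpha>" "(y1, b1) \<in> G"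
    using assms unfolding graph_extend_def by blast
  have pt: "x1 t - y1 t = (c2 - c1) * x0 t" for t
    using fun_cong[OF trans[OF e(1)[symmetric] e(4)], of t] by (simp add: algebra_simps)
  have c12: "c1 = c2"
  proof (rule ccontr)
    assume "c1 \<noteq> c2"
    have "((\<lambda>t. x1 t + (-1) * y1 t), a1 + (-1) * b1) \<in> G"
      using dominated_graph_add[OF e(3) dominated_graph_scale[OF e(6)]] .
    from dominated_graph_scale[OF this, of "1 / (c2 - c1)"]
    have "((\<lambda>t. (1 / (c2 - c1)) * (x1 t + (-1) * y1 t)), (1 / (c2 - c1)) * (a1 + (-1) * b1)) \<in> G" .
    moreover have "(\<lambda>t. (1 / (c2 - c1)) * (x1 t + (-1) * y1 t)) = x0"
    proof
      fix t show "(1 / (c2 - c1)) * (x1 t + (-1) * y1 t) = x0 t"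
        using pt[of t] \<open>c1 \<noteq> c2\<close> by (simp add: field_simps)
    qed
    ultimately show False using new by simp
  qed
  then have "x1 = y1" using pt by (simp add: fun_eq_iff)
  then show "a = b" using dominated_graph_unique[OF e(3)] e c12 by simp
qed

lemma dominated_graph_extend: "dominated_graph W p (graph_extend G x0 \<alpha>)"
  unfolding dominated_graph_def
proof (intro conjI allI impI)
  show "graph_extend G x0 \<alpha> \<noteq> {}" using graph_extendI[OF dominated_graph_zero refl refl] by blast
next
  fix x a assume "(x, a) \<in> graph_extend G x0 \<alpha>"
  then obtain y b c where e: "x = (\<lambda>t. y t + c * x0 t)" "a = b + c * \<alpha>" "(y, b) \<in> G"
    unfolding graph_extend_def by blast
  show "x \<in> W" unfolding e(1) by (rule W_add[OF dominated_graph_in[OF e(3)] W_scale[OF x0]])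
  show "a \<le> p x" unfolding e(1,2) by (rule graph_extend_dominated[OF e(3)])
next
  fix x a y b assume "(x, a) \<in> graph_extend G x0 \<alpha>" "(y, b) \<in> graph_extend G x0 \<alpha>"
  then obtain x1 a1 c1 y1 b1 c2 where
    e: "x = (\<lambda>t. x1 t + c1 * x0 t)" "a = a1 + c1 * \<alpha>" "(x1, a1) \<in> G"
       "y = (\<lambda>t. y1 t + c2 * x0 t)" "b = b1 + c2 * \<alpha>" "(y1, b1) \<in> G"
    unfolding graph_extend_def by blast
  have "(\<lambda>t. x t + y t) = (\<lambda>t. (x1 t + y1 t) + (c1 + c2) * x0 t)"
    "a + b = (a1 + b1) + (c1 + c2) * \<alpha>"
    using e by (auto simp: algebra_simps)
  then show "((\<lambda>t. x t + y t), a + b) \<in> graph_extend G x0 \<alpha>"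
    by (intro graph_extendI[OF dominated_graph_add[OF e(3) e(6)]])
next
  fix x a k assume "(x, a) \<in> graph_extend G x0 \<alpha>"
  then obtain x1 a1 c1 where e: "x = (\<lambda>t. x1 t + c1 * x0 t)" "a = a1 + c1 * \<alpha>" "(x1, a1) \<in> G"
    unfolding graph_extend_def by blast
  have "(\<lambda>t. k * x t) = (\<lambda>t. k * x1 t + (k * c1) * x0 t)" "k * a = k * a1 + (k * c1) * \<alpha>"
    using e by (auto simp: algebra_simps)
  then show "((\<lambda>t. k * x t), k * a) \<in> graph_extend G x0 \<alpha>"
    by (intro graph_extendI[OF dominated_graph_scale[OF e(3)]])
next
  fix x a b assume "(x, a) \<in> graph_extend G x0 \<alpha>" "(x, b) \<in> graph_extend G x0 \<alpha>"
  then show "a = b" by (rule graph_extend_unique)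
qed

lemma graph_extend_proper: "G \<subset> graph_extend G x0 \<alpha>"
proof -
  have "(y, a) \<in> graph_extend G x0 \<alpha>" if "(y, a) \<in> G" for y a
    by (rule graph_extendI[OF that, where c=0]) auto
  then have "G \<subseteq> graph_extend G x0 \<alpha>" by auto
  moreover have "(x0, \<alpha>) \<in> graph_extend G x0 \<alpha>" by (rule graph_extendI[OF dominated_graph_zero, where c=1]) auto
  ultimately show ?thesis using new by blast
qed

end

lemma dominated_graph_extendable:
  assumes "x0 \<in> W" "\<forall>a. (x0, a) \<notin> G"
  shows "\<exists>G'. dominated_graph W p G' \<and> G \<subset> G'"
proof -
  obtain \<alpha> where "\<forall>y a. (y, a) \<in> G \<longrightarrow> a - p (\<lambda>t. y t + (-1) * x0 t) \<le> \<alpha>"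
    "\<forall>y a. (y, a) \<in> G \<longrightarrow> \<alpha> \<le> p (\<lambda>t. y t + x0 t) - a"
    using exists_extension_value[OF assms(1)] by blast
  then have "dominated_graph W p (graph_extend G x0 \<alpha>)" "G \<subset> graph_extend G x0 \<alpha>"
    using dominated_graph_extend[OF assms] graph_extend_proper[OF assms] by simp_all
  then show ?thesis by blast
qed

end

lemma dominated_graph_chain_Union:
  assumes C: "C \<noteq> {}" "subset.chain {G. dominated_graph W p G} C"
  shows "dominated_graph W p (\<Union>C)"
proof -
  have dom: "\<And>X. X \<in> C \<Longrightarrow> dominated_graph W p X" and ch: "\<And>X Y. X \<in> C \<Longrightarrow> Y \<in> C \<Longrightarrow> X \<subseteq> Y \<or> Y \<subseteq> X"
    using C(2) unfolding subset.chain_def by auto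
  have common: "\<exists>Z\<in>C. (x, a) \<in> Z \<and> (y, b) \<in> Z" if "(x, a) \<in> \<Union>C" "(y, b) \<in> \<Union>C" for x a y b
    using that ch by blast
  show ?thesis
    unfolding dominated_graph_def
  proof (intro conjI allI impI)
    show "\<Union>C \<noteq> {}" using C(1) dom unfolding dominated_graph_def by blast
  next
    fix x a assume "(x, a) \<in> \<Union>C"
    then show "x \<in> W" "a \<le> p x" using dominated_graph_in[OF dom] dominated_graph_le[OF dom] by auto
  next
    fix x a y b assume "(x, a) \<in> \<Union>C" "(y, b) \<in> \<Union>C"
    then show "((\<lambda>t. x t + y t), a + b) \<in> \<Union>C" using common dominated_graph_add[OF dom] by blast
  next
    fix x a c assume "(x, a) \<in> \<Union>C"
    then show "((\<lambda>t. c * x t), c * a) \<in> \<Union>C" using dominated_graph_scale[OF dom] by blast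
  next
    fix x a b assume "(x, a) \<in> \<Union>C" "(x, b) \<in> \<Union>C"
    then show "a = b" using common dominated_graph_unique[OF dom] by blast
  qed
qed

lemma exists_total_dominated_graph:
  assumes G0: "dominated_graph W p G0"
  shows "\<exists>M. dominated_graph W p M \<and> G0 \<subseteq> M \<and> (\<forall>x\<in>W. \<exists>a. (x, a) \<in> M)"
proof -
  define A where "A = {G. dominated_graph W p G \<and> G0 \<subseteq> G}"
  have "\<exists>M\<in>A. \<forall>X\<in>A. M \<subseteq> X \<longrightarrow> X = M"
  proof (rule subset_Zorn_nonempty)
    show "A \<noteq> {}" using G0 unfolding A_def by blast
    fix C assume C: "C \<noteq> {}" "subset.chain A C"
    then have "C \<subseteq> A" by (simp add: subset.chain_def)
    then have "subset.chain {G. dominated_graph W p G} C"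
      using C(2) unfolding A_def subset.chain_def by auto
    then have "dominated_graph W p (\<Union>C)" by (rule dominated_graph_chain_Union[OF C(1)])
    moreover have "G0 \<subseteq> \<Union>C" using C(1) \<open>C \<subseteq> A\<close> unfolding A_def by auto
    ultimately show "\<Union>C \<in> A" unfolding A_def by simp
  qed
  then obtain M where "M \<in> A" and max: "\<And>X. X \<in> A \<Longrightarrow> M \<subseteq> X \<Longrightarrow> X = M"
    by blast
  then have M: "dominated_graph W p M" "G0 \<subseteq> M" unfolding A_def by simp_all
  have "\<exists>a. (x, a) \<in> M" if x: "x \<in> W" for x
  proof (rule ccontr)
    assume "\<nexists>a. (x, a) \<in> M"
    then obtain G' where G': "dominated_graph W p G'" "M \<subset> G'"
      using dominated_graph_extendable[OF M(1) x] by blast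
    then have "G' \<in> A" using M(2) unfolding A_def by auto
    then show False using max[of G'] G'(2) by auto
  qed
  then show ?thesis using M by blast
qed

theorem Hahn_Banach:
  assumes G0: "dominated_graph W p G0"
  shows "\<exists>L. (\<forall>x\<in>W. L x \<le> p x) \<and> (\<forall>x\<in>W. \<forall>y\<in>W. L (\<lambda>t. x t + y t) = L x + L y) \<and>
             (\<forall>x\<in>W. \<forall>c. L (\<lambda>t. c * x t) = c * L x) \<and> (\<forall>x a. (x, a) \<in> G0 \<longrightarrow> L x = a)"
proof -
  obtain M where M: "dominated_graph W p M" "G0 \<subseteq> M" and total: "\<And>x. x \<in> W \<Longrightarrow> \<exists>a. (x, a) \<in> M"
    using exists_total_dominated_graph[OF G0] by blast
  define L where "L x = (THE a. (x, a) \<in> M)" for x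
  have L: "L x = a" if "(x, a) \<in> M" for x a
    unfolding L_def using that dominated_graph_unique[OF M(1)] by blast
  have LM: "(x, L x) \<in> M" if "x \<in> W" for x
    using total[OF that] L by auto
  show ?thesis
  proof (intro exI[of _ L] conjI ballI allI impI)
    show "L x \<le> p x" if "x \<in> W" for x using dominated_graph_le[OF M(1) LM[OF that]] .
    show "L (\<lambda>t. x t + y t) = L x + L y" if "x \<in> W" "y \<in> W" for x y
      using L[OF dominated_graph_add[OF M(1) LM LM]] that by blast
    show "L (\<lambda>t. c * x t) = c * L x" if "x \<in> W" for x c
      using L[OF dominated_graph_scale[OF M(1) LM[OF that]]] .
    show "L x = a" if "(x, a) \<in> G0" for x a using L that M(2) by blast
  qed
qed

end

section \<open>The Riesz representation theorem\<close>

lemma field_le_epsilon_mult: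
  fixes a b c :: real
  assumes "\<And>e. e > 0 \<Longrightarrow> a \<le> b + e * c" "c \<ge> 0"
  shows "a \<le> b"
proof (rule field_le_epsilon)
  fix e :: real assume e: "e > 0"
  have "a \<le> b + (e / (c + 1)) * c" using assms(1)[of "e / (c+1)"] e assms(2) by simp
  also have "(e / (c + 1)) * c \<le> e" using e assms(2) by (simp add: field_simps)
  finally show "a \<le> b + e" by simp
qed

lemma compact_infdist_compl_pos:
  fixes K V :: "'a::metric_space set"
  assumes "compact K" "open V" "K \<subseteq> V" "V \<noteq> UNIV"
  shows "\<exists>\<delta>>0. \<forall>x\<in>K. \<delta> \<le> infdist x (- V)"
proof (cases "K = {}")
  case True then show ?thesis by (auto intro: exI[of _ 1])
next
  case False
  have "continuous_on K (\<lambda>x. infdist x (- V))" by (intro continuous_on_infdist continuous_on_id)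
  then obtain x0 where x0: "x0 \<in> K" "\<forall>y\<in>K. infdist x0 (- V) \<le> infdist y (- V)"
    using continuous_attains_inf[OF assms(1) False] by blast
  have "0 < infdist x0 (- V)"
    using x0(1) assms by (intro infdist_pos_not_in_closed) auto
  then show ?thesis using x0 by blast
qed

text \<open>A weakening of Rudin's \<open>\<phi> \<prec> V\<close>: no compact support is required and \<open>V\<close> need not be open.\<close>

definition subordinate :: "'a::topological_space set \<Rightarrow> ('a \<Rightarrow> real) \<Rightarrow> bool" where
  "subordinate V \<phi> \<longleftrightarrow> cfun \<phi> \<and> (\<forall>x. 0 \<le> \<phi> x \<and> \<phi> x \<le> 1) \<and> (\<forall>x. x \<notin> V \<longrightarrow> \<phi> x = 0)"

lemma subordinate_zero: "subordinate V (\<lambda>x. 0)"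
  unfolding subordinate_def by simp

lemma subordinate_mono: "subordinate V \<phi> \<Longrightarrow> V \<subseteq> W \<Longrightarrow> subordinate W \<phi>"
  unfolding subordinate_def by blast

lemma subordinate_add:
  assumes "subordinate A \<phi>" "subordinate B \<psi>" "A \<inter> B = {}"
  shows "subordinate (A \<union> B) (\<lambda>x. \<phi> x + \<psi> x)"
proof -
  have "\<phi> x + \<psi> x \<le> 1" for x using assms unfolding subordinate_def by (cases "x \<in> A") auto
  then show ?thesis using assms unfolding subordinate_def by auto
qed

lemma subordinate_cutoff:
  assumes \<phi>: "subordinate V \<phi>" and \<epsilon>: "\<epsilon> > 0"
  shows "subordinate {x. \<epsilon> \<le> \<phi> x} (\<lambda>x. max 0 (\<phi> x - \<epsilon>))"
    and "closed {x. \<epsilon> \<le> \<phi> x}" and "{x. \<epsilon> \<le> \<phi> x} \<subseteq> V"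
proof -
  have c: "cfun \<phi>" and b: "\<And>x. \<phi> x \<le> 1" and z: "\<And>x. x \<notin> V \<Longrightarrow> \<phi> x = 0"
    using \<phi> unfolding subordinate_def by auto
  show "subordinate {x. \<epsilon> \<le> \<phi> x} (\<lambda>x. max 0 (\<phi> x - \<epsilon>))"
  proof -
    have "\<phi> x - \<epsilon> \<le> 1" for x using b[of x] \<epsilon> by linarith
    then show ?thesis unfolding subordinate_def using c by (auto intro!: cfun_max cfun_diff)
  qed
  show "closed {x. \<epsilon> \<le> \<phi> x}"
    using c unfolding cfun_def by (rule closed_Collect_le[OF continuous_on_const])
  show "{x. \<epsilon> \<le> \<phi> x} \<subseteq> V" using z \<epsilon> by force
qed

text \<open>A partition of unity for two open sets, made from the distance to the complement of \<open>V1\<close>.\<close>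

lemma subordinate_split:
  fixes V1 V2 :: "'a::metric_space set"
  assumes o1: "open V1" and o2: "open V2" and F: "compact F" "F \<subseteq> V1 \<union> V2"
    and g: "subordinate F g"
  shows "\<exists>g1 g2. subordinate V1 g1 \<and> subordinate V2 g2 \<and> g = (\<lambda>x. g1 x + g2 x)"
proof (cases "V1 = UNIV")
  case True
  then show ?thesis using g subordinate_zero by (intro exI[of _ g] exI[of _ "\<lambda>x. 0"]) (auto simp: subordinate_def)
next
  case False
  have ga: "cfun g" "\<And>x. 0 \<le> g x" "\<And>x. g x \<le> 1" "\<And>x. x \<notin> F \<Longrightarrow> g x = 0"
    using g unfolding subordinate_def by auto
  have "compact (F \<inter> - V2)" using F(1) o2 by (intro compact_Int_closed) auto
  moreover have "F \<inter> - V2 \<subseteq> V1" using F(2) by blast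
  ultimately obtain \<delta> where \<delta>: "\<delta> > 0" "\<forall>x\<in>F \<inter> - V2. \<delta> \<le> infdist x (- V1)"
    using compact_infdist_compl_pos[OF _ o1 _ False] by blast
  define g1 where "g1 = (\<lambda>x. min (g x) ((1/\<delta>) * infdist x (- V1)))"
  have g1: "0 \<le> g1 x" "g1 x \<le> g x" for x
    using ga(2)[of x] infdist_nonneg[of x "- V1"] \<delta>(1) unfolding g1_def by auto
  have cg1: "cfun g1" unfolding g1_def using ga(1) by (intro cfun_min cfun_mult cfun_infdist)
  have "subordinate V1 g1"
    unfolding subordinate_def
  proof (intro conjI allI impI cg1 g1(1))
    fix x
    show "g1 x \<le> 1" using g1(2)[of x] ga(3)[of x] by linarith
    assume "x \<notin> V1"
    then have "infdist x (- V1) = 0" by (intro infdist_zero) simp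
    then show "g1 x = 0" using ga(2)[of x] unfolding g1_def by simp
  qed
  moreover have "subordinate V2 (\<lambda>x. g x - g1 x)"
    unfolding subordinate_def
  proof (intro conjI allI impI cfun_diff ga(1) cg1)
    fix x
    show "0 \<le> g x - g1 x" "g x - g1 x \<le> 1" using g1[of x] ga(3)[of x] by auto
    assume "x \<notin> V2"
    show "g x - g1 x = 0"
    proof (cases "x \<in> F")
      case True
      then have "1 \<le> (1/\<delta>) * infdist x (- V1)" using \<delta> \<open>x \<notin> V2\<close> by (auto simp: field_simps)
      then show ?thesis using ga(3)[of x] unfolding g1_def by simp
    next
      case False
      then show ?thesis using ga(4) g1[of x] by simp
    qed
  qed
  ultimately show ?thesis by (intro exI[of _ g1] exI[of _ "\<lambda>x. g x - g1 x"]) auto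
qed

definition layer :: "real \<Rightarrow> ('a \<Rightarrow> real) \<Rightarrow> nat \<Rightarrow> 'a \<Rightarrow> real" where
  "layer a \<phi> j x = min a (max 0 (\<phi> x - real j * a))"

lemma cfun_layer: "cfun \<phi> \<Longrightarrow> cfun (layer a \<phi> j)"
  unfolding layer_def[abs_def] by (intro cfun_min cfun_max cfun_diff) auto

lemma sum_min_max_layers:
  fixes a t :: real and N :: nat
  assumes a: "a > 0" and t: "0 \<le> t" "t \<le> real N * a"
  shows "(\<Sum>j<N. min a (max 0 (t - real j * a))) = t"
  using t
proof (induction N arbitrary: t)
  case 0 then show ?case by simp
next
  case (Suc N)
  have e: "t - real (Suc j) * a = (t - a) - real j * a" for j by (simp add: algebra_simps)
  have "(\<Sum>j<Suc N. min a (max 0 (t - real j * a))) =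
        min a (max 0 (t - real 0 * a)) + (\<Sum>j<N. min a (max 0 (t - real (Suc j) * a)))"
    by (rule sum.lessThan_Suc_shift)
  also have "\<dots> = min a (max 0 t) + (\<Sum>j<N. min a (max 0 ((t - a) - real j * a)))"
    by (simp only: e)
  also have "\<dots> = t"
  proof (cases "t \<le> a")
    case True
    have "(\<Sum>j<N. min a (max 0 ((t - a) - real j * a))) = 0"
    proof (intro sum.neutral ballI)
      fix j assume "j \<in> {..<N}"
      have "0 \<le> real j * a" using a by simp
      then have "(t - a) - real j * a \<le> 0" using True by linarith
      then show "min a (max 0 ((t - a) - real j * a)) = 0" using a by simp
    qed
    then show ?thesis using True Suc.prems by simp
  next
    case False
    have "(\<Sum>j<N. min a (max 0 ((t - a) - real j * a))) = t - a"
      using False Suc.prems by (intro Suc.IH) (auto simp: algebra_simps)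
    then show ?thesis using False by simp
  qed
  finally show ?case .
qed

lemma sum_layer:
  assumes "a > 0" "0 \<le> \<phi> x" "\<phi> x \<le> real N * a"
  shows "(\<Sum>j<N. layer a \<phi> j x) = \<phi> x"
  unfolding layer_def using sum_min_max_layers[OF assms] .

locale positive_linear_functional =
  fixes L :: "('a::metric_space \<Rightarrow> real) \<Rightarrow> real"
  assumes cX: "compact (UNIV::'a set)"
    and L_add: "\<And>f g. cfun f \<Longrightarrow> cfun g \<Longrightarrow> L (\<lambda>x. f x + g x) = L f + L g"
    and L_scale: "\<And>f c. cfun f \<Longrightarrow> L (\<lambda>x. c * f x) = c * L f"
    and L_nonneg: "\<And>f. cfun f \<Longrightarrow> (\<And>x. 0 \<le> f x) \<Longrightarrow> 0 \<le> L f"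
begin

lemma L_zero: "L (\<lambda>x. 0) = 0"
  using L_scale[of "\<lambda>x. 0" 0] by simp

lemma L_diff: "cfun f \<Longrightarrow> cfun g \<Longrightarrow> L (\<lambda>x. f x - g x) = L f - L g"
proof -
  assume f: "cfun f" and g: "cfun g"
  have "(\<lambda>x. f x - g x) = (\<lambda>x. f x + (\<lambda>x. (-1) * g x) x)" by simp
  then show ?thesis using L_add[OF f cfun_mult[OF g, of "-1"]] L_scale[OF g, of "-1"] by simp
qed

lemma L_mono: "cfun f \<Longrightarrow> cfun g \<Longrightarrow> (\<And>x. f x \<le> g x) \<Longrightarrow> L f \<le> L g"
  using L_nonneg[of "\<lambda>x. g x - f x"] L_diff[of g f] by auto

lemma L_sum: "finite I \<Longrightarrow> (\<And>i. i \<in> I \<Longrightarrow> cfun (f i)) \<Longrightarrow> L (\<lambda>x. \<Sum>i\<in>I. f i x) = (\<Sum>i\<in>I. L (f i))"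
proof (induction I rule: finite_induct)
  case empty then show ?case using L_zero by simp
next
  case (insert a I)
  have "L (\<lambda>x. \<Sum>i\<in>insert a I. f i x) = L (\<lambda>x. f a x + (\<lambda>x. \<Sum>i\<in>I. f i x) x)"
    using insert by simp
  also have "\<dots> = L (f a) + L (\<lambda>x. \<Sum>i\<in>I. f i x)"
    using insert by (intro L_add) (auto intro!: cfun_sum)
  finally show ?case using insert by simp
qed

lemma L_one_nonneg: "0 \<le> L (\<lambda>x. 1)"
  by (rule L_nonneg) auto

lemma L_le_cutoff:
  assumes "cfun \<phi>"
  shows "L \<phi> \<le> L (\<lambda>x. max 0 (\<phi> x - \<epsilon>)) + \<epsilon> * L (\<lambda>x. 1)"
proof -
  have c: "cfun (\<lambda>x. max 0 (\<phi> x - \<epsilon>))" using assms by (intro cfun_max cfun_diff) auto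
  have "L \<phi> \<le> L (\<lambda>x. max 0 (\<phi> x - \<epsilon>) + \<epsilon> * 1)"
    using c by (intro L_mono assms) auto
  also have "\<dots> = L (\<lambda>x. max 0 (\<phi> x - \<epsilon>)) + L (\<lambda>x. \<epsilon> * 1)"
    by (rule L_add[OF c cfun_mult[OF cfun_const]])
  also have "L (\<lambda>x. \<epsilon> * 1) = \<epsilon> * L (\<lambda>x. 1)" by (rule L_scale[OF cfun_const])
  finally show ?thesis .
qed

lemma closed_imp_compact_UNIV: "closed (F :: 'a set) \<Longrightarrow> compact F"
  using compact_Int_closed[OF cX, of F] by simp

text \<open>\<open>open_mass V\<close> is the measure of the open set \<open>V\<close> to be constructed, and \<open>outer_mass\<close> the
  corresponding outer measure.\<close>

definition open_mass :: "'a set \<Rightarrow> real" where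
  "open_mass V = Sup {L \<phi> | \<phi>. subordinate V \<phi>}"

definition outer_mass :: "'a set \<Rightarrow> real" where
  "outer_mass A = Inf {open_mass V | V. open V \<and> A \<subseteq> V}"

lemma subordinate_le_one: "subordinate V \<phi> \<Longrightarrow> L \<phi> \<le> L (\<lambda>x. 1)"
  unfolding subordinate_def by (intro L_mono) auto

lemma open_mass_set_nonempty: "{L \<phi> | \<phi>. subordinate V \<phi>} \<noteq> {}" using subordinate_zero by blast
lemma open_mass_set_bdd: "bdd_above {L \<phi> | \<phi>. subordinate V \<phi>}"
  using subordinate_le_one by (intro bdd_aboveI[where M="L (\<lambda>x. 1)"]) blast

lemma open_mass_upper: "subordinate V \<phi> \<Longrightarrow> L \<phi> \<le> open_mass V"
  unfolding open_mass_def by (rule cSup_upper[OF _ open_mass_set_bdd]) blast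

lemma open_mass_least: "(\<And>\<phi>. subordinate V \<phi> \<Longrightarrow> L \<phi> \<le> c) \<Longrightarrow> open_mass V \<le> c"
  unfolding open_mass_def by (rule cSup_least[OF open_mass_set_nonempty]) blast

lemma open_mass_nonneg: "0 \<le> open_mass V"
  using open_mass_upper[OF subordinate_zero] L_zero by simp

lemma open_mass_le_one: "open_mass V \<le> L (\<lambda>x. 1)"
  using subordinate_le_one by (intro open_mass_least) blast

lemma open_mass_mono: "V1 \<subseteq> V2 \<Longrightarrow> open_mass V1 \<le> open_mass V2"
  by (intro open_mass_least open_mass_upper) (auto simp: subordinate_def)

lemma open_mass_UNIV: "open_mass UNIV = L (\<lambda>x. 1)"
  using open_mass_le_one[of UNIV] open_mass_upper[of UNIV "\<lambda>x. 1"] by (auto simp: subordinate_def)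

lemma open_mass_approx:
  assumes "\<epsilon> > 0" shows "\<exists>\<phi>. subordinate V \<phi> \<and> open_mass V - \<epsilon> < L \<phi>"
proof -
  have "open_mass V - \<epsilon> < Sup {L \<phi> | \<phi>. subordinate V \<phi>}" using assms open_mass_def by simp
  then obtain v where "v \<in> {L \<phi> | \<phi>. subordinate V \<phi>}" "open_mass V - \<epsilon> < v"
    using less_cSupE[OF _ open_mass_set_nonempty] by blast
  then show ?thesis by blast
qed

lemma outer_mass_set_nonempty: "{open_mass V | V. open V \<and> A \<subseteq> V} \<noteq> {}" by blast
lemma outer_mass_set_bdd: "bdd_below {open_mass V | V. open V \<and> A \<subseteq> V}"
  using open_mass_nonneg by (intro bdd_belowI[where m=0]) blast

lemma outer_mass_le_open_mass: "open V \<Longrightarrow> A \<subseteq> V \<Longrightarrow> outer_mass A \<le> open_mass V"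
  unfolding outer_mass_def by (rule cInf_lower[OF _ outer_mass_set_bdd]) blast

lemma outer_mass_greatest: "(\<And>V. open V \<Longrightarrow> A \<subseteq> V \<Longrightarrow> c \<le> open_mass V) \<Longrightarrow> c \<le> outer_mass A"
  unfolding outer_mass_def by (rule cInf_greatest[OF outer_mass_set_nonempty]) blast

lemma outer_mass_nonneg: "0 \<le> outer_mass A"
  using open_mass_nonneg by (intro outer_mass_greatest) auto

lemma outer_mass_open: "open V \<Longrightarrow> outer_mass V = open_mass V"
  using outer_mass_le_open_mass[of V V] open_mass_mono by (intro antisym outer_mass_greatest) auto

lemma outer_mass_mono: "A \<subseteq> B \<Longrightarrow> outer_mass A \<le> outer_mass B"
  by (intro outer_mass_greatest outer_mass_le_open_mass) auto

lemma outer_mass_approx: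
  assumes "\<epsilon> > 0" shows "\<exists>V. open V \<and> A \<subseteq> V \<and> open_mass V < outer_mass A + \<epsilon>"
proof -
  have "Inf {open_mass V | V. open V \<and> A \<subseteq> V} < outer_mass A + \<epsilon>" using assms outer_mass_def by simp
  then obtain v where "v \<in> {open_mass V | V. open V \<and> A \<subseteq> V}" "v < outer_mass A + \<epsilon>"
    using cInf_lessD[OF outer_mass_set_nonempty] by blast
  then show ?thesis by blast
qed

lemma subordinate_empty: "subordinate {} \<phi> \<Longrightarrow> L \<phi> = 0"
proof -
  assume "subordinate {} \<phi>"
  then have "\<phi> = (\<lambda>x. 0)" unfolding subordinate_def by auto
  then show ?thesis using L_zero by simp
qed

lemma open_mass_empty: "open_mass {} = 0"
  using open_mass_nonneg[of "{}"] subordinate_empty by (intro antisym open_mass_least) auto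

lemma open_mass_Un:
  assumes o1: "open V1" and o2: "open V2"
  shows "open_mass (V1 \<union> V2) \<le> open_mass V1 + open_mass V2"
proof (rule open_mass_least)
  fix \<phi> assume \<phi>: "subordinate (V1 \<union> V2) \<phi>"
  show "L \<phi> \<le> open_mass V1 + open_mass V2"
  proof (rule field_le_epsilon_mult[OF _ L_one_nonneg])
    fix \<epsilon> :: real assume \<epsilon>: "\<epsilon> > 0"
    note cut = subordinate_cutoff[OF \<phi> \<epsilon>]
    obtain g1 g2 where g: "subordinate V1 g1" "subordinate V2 g2"
      "(\<lambda>x. max 0 (\<phi> x - \<epsilon>)) = (\<lambda>x. g1 x + g2 x)"
      using subordinate_split[OF o1 o2 closed_imp_compact_UNIV[OF cut(2)] cut(3) cut(1)] by blast
    have "L (\<lambda>x. max 0 (\<phi> x - \<epsilon>)) = L g1 + L g2"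
      unfolding g(3) using g(1,2) by (intro L_add) (simp_all add: subordinate_def)
    also have "\<dots> \<le> open_mass V1 + open_mass V2"
      using open_mass_upper[OF g(1)] open_mass_upper[OF g(2)] by (rule add_mono)
    finally show "L \<phi> \<le> open_mass V1 + open_mass V2 + \<epsilon> * L (\<lambda>x. 1)"
      using L_le_cutoff[of \<phi> \<epsilon>] \<phi> by (simp add: subordinate_def)
  qed
qed

lemma open_mass_finite_UN:
  fixes n :: nat
  assumes "\<And>i. open (V i)"
  shows "open_mass (\<Union>i<n. V i) \<le> (\<Sum>i<n. open_mass (V i))"
proof (induction n)
  case 0 then show ?case using open_mass_empty by simp
next
  case (Suc n)
  have "(\<Union>i<Suc n. V i) = (\<Union>i<n. V i) \<union> V n" by (auto simp: lessThan_Suc)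
  have "open (\<Union>i<n. V i)" using assms by (intro open_UN) auto
  then have "open_mass ((\<Union>i<n. V i) \<union> V n) \<le> open_mass (\<Union>i<n. V i) + open_mass (V n)"
    using open_mass_Un[of "\<Union>i<n. V i" "V n"] assms by blast
  then have "open_mass (\<Union>i<Suc n. V i) \<le> open_mass (\<Union>i<n. V i) + open_mass (V n)"
    using \<open>(\<Union>i<Suc n. V i) = (\<Union>i<n. V i) \<union> V n\<close> by simp
  then show ?case using Suc by simp
qed

lemma open_mass_countable_UN_approx:
  fixes V :: "nat \<Rightarrow> 'a set"
  assumes V: "\<And>i. open (V i)" and \<phi>: "subordinate (\<Union>i. V i) \<phi>" and \<epsilon>: "\<epsilon> > 0"
  shows "\<exists>n. L \<phi> \<le> (\<Sum>i<n. open_mass (V i)) + \<epsilon> * L (\<lambda>x. 1)"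
proof -
  note cut = subordinate_cutoff[OF \<phi> \<epsilon>]
  have "{x. \<epsilon> \<le> \<phi> x} \<subseteq> \<Union>(V ` UNIV)" using cut(3) by simp
  then obtain C where C: "finite C" "{x. \<epsilon> \<le> \<phi> x} \<subseteq> (\<Union>i\<in>C. V i)"
    using compactE_image[OF closed_imp_compact_UNIV[OF cut(2)], of UNIV V] V by metis
  obtain n where "C \<subseteq> {..<n}" using finite_nat_bounded[OF C(1)] by blast
  then have "{x. \<epsilon> \<le> \<phi> x} \<subseteq> (\<Union>i<n. V i)" using C(2) by blast
  then have "L (\<lambda>x. max 0 (\<phi> x - \<epsilon>)) \<le> open_mass (\<Union>i<n. V i)"
    using subordinate_mono[OF cut(1)] by (intro open_mass_upper)
  also have "\<dots> \<le> (\<Sum>i<n. open_mass (V i))" by (rule open_mass_finite_UN[OF V])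
  finally show ?thesis using L_le_cutoff[of \<phi> \<epsilon>] \<phi> by (intro exI[of _ n]) (simp add: subordinate_def)
qed

lemma open_mass_countable_UN:
  fixes V :: "nat \<Rightarrow> 'a set"
  assumes o: "\<And>i. open (V i)"
  shows "ennreal (open_mass (\<Union>i. V i)) \<le> (\<Sum>i. ennreal (open_mass (V i)))"
proof (cases "(\<Sum>i. ennreal (open_mass (V i))) = top")
  case True then show ?thesis by simp
next
  case False
  then obtain r where r: "(\<Sum>i. ennreal (open_mass (V i))) = ennreal r" "0 \<le> r"
    by (metis ennreal_cases ennreal_enn2real_if)
  have fin: "(\<Sum>i<n. open_mass (V i)) \<le> r" for n
  proof -
    have "ennreal (\<Sum>i<n. open_mass (V i)) = (\<Sum>i<n. ennreal (open_mass (V i)))"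
      using open_mass_nonneg by (intro sum_ennreal[symmetric]) auto
    also have "\<dots> \<le> (\<Sum>i. ennreal (open_mass (V i)))" by (intro sum_le_suminf) auto
    finally show ?thesis using r by (simp add: ennreal_le_iff)
  qed
  have "open_mass (\<Union>i. V i) \<le> r"
  proof (rule open_mass_least)
    fix \<phi> assume a: "subordinate (\<Union>i. V i) \<phi>"
    show "L \<phi> \<le> r"
    proof (rule field_le_epsilon_mult[OF _ L_one_nonneg])
      fix e :: real assume "e > 0"
      then obtain n where "L \<phi> \<le> (\<Sum>i<n. open_mass (V i)) + e * L (\<lambda>x. 1)"
        using open_mass_countable_UN_approx[OF o a] by blast
      then show "L \<phi> \<le> r + e * L (\<lambda>x. 1)" using fin[of n] by linarith
    qed
  qed
  then show ?thesis using r by (simp add: ennreal_le_iff)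
qed

lemma outer_mass_Un: "outer_mass (A \<union> B) \<le> outer_mass A + outer_mass B"
proof (rule field_le_epsilon)
  fix e :: real assume e: "e > 0"
  obtain VA where VA: "open VA" "A \<subseteq> VA" "open_mass VA < outer_mass A + e/2" using outer_mass_approx[of "e/2" A] e by auto
  obtain VB where VB: "open VB" "B \<subseteq> VB" "open_mass VB < outer_mass B + e/2" using outer_mass_approx[of "e/2" B] e by auto
  have "outer_mass (A \<union> B) \<le> open_mass (VA \<union> VB)" using VA VB by (intro outer_mass_le_open_mass) auto
  also have "\<dots> \<le> open_mass VA + open_mass VB" using open_mass_Un[OF VA(1) VB(1)] .
  finally show "outer_mass (A \<union> B) \<le> outer_mass A + outer_mass B + e" using VA(3) VB(3) by linarith
qed

lemma open_mass_split:
  assumes U: "open U" and V: "open V"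
  shows "open_mass (U \<inter> V) + outer_mass (U - V) \<le> open_mass U"
proof (rule field_le_epsilon_mult[where c="2 + L (\<lambda>x. 1)"])
  show "0 \<le> 2 + L (\<lambda>x. 1)" using L_one_nonneg by simp
  fix \<epsilon> :: real assume \<epsilon>: "\<epsilon> > 0"
  obtain \<phi>1 where \<phi>1: "subordinate (U \<inter> V) \<phi>1" "open_mass (U \<inter> V) - \<epsilon> < L \<phi>1"
    using open_mass_approx[OF \<epsilon>] by blast
  define F where "F = {x. \<epsilon> \<le> \<phi>1 x}"
  define g1 where "g1 = (\<lambda>x. max 0 (\<phi>1 x - \<epsilon>))"
  note cut = subordinate_cutoff[OF \<phi>1(1) \<epsilon>, folded F_def g1_def]
  define W where "W = U - F"
  have W: "open W" "U - V \<subseteq> W" using U cut(2,3) by (auto simp: W_def)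
  obtain \<phi>2 where \<phi>2: "subordinate W \<phi>2" "open_mass W - \<epsilon> < L \<phi>2"
    using open_mass_approx[OF \<epsilon>] by blast
  have "F \<inter> W = {}" "F \<union> W \<subseteq> U" using cut(3) by (auto simp: W_def)
  then have "subordinate U (\<lambda>x. g1 x + \<phi>2 x)"
    using subordinate_add[OF cut(1) \<phi>2(1)] subordinate_mono by blast
  then have "L (\<lambda>x. g1 x + \<phi>2 x) \<le> open_mass U" by (rule open_mass_upper)
  moreover have "L (\<lambda>x. g1 x + \<phi>2 x) = L g1 + L \<phi>2"
    using cut(1) \<phi>2(1) by (intro L_add) (simp_all add: subordinate_def)
  moreover have "outer_mass (U - V) \<le> open_mass W" by (rule outer_mass_le_open_mass[OF W])
  moreover have "L \<phi>1 \<le> L g1 + \<epsilon> * L (\<lambda>x. 1)"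
    using L_le_cutoff[of \<phi>1 \<epsilon>] \<phi>1(1) by (simp add: subordinate_def g1_def)
  ultimately show "open_mass (U \<inter> V) + outer_mass (U - V) \<le> open_mass U + \<epsilon> * (2 + L (\<lambda>x. 1))"
    using \<phi>1(2) \<phi>2(2) by (simp add: algebra_simps)
qed

lemma outer_mass_split:
  assumes oV: "open V"
  shows "outer_mass (V \<inter> X) + outer_mass ((UNIV - V) \<inter> X) = outer_mass X"
proof (rule antisym)
  show "outer_mass X \<le> outer_mass (V \<inter> X) + outer_mass ((UNIV - V) \<inter> X)"
  proof -
    have "X = (V \<inter> X) \<union> ((UNIV - V) \<inter> X)" by blast
    then show ?thesis using outer_mass_Un[of "V \<inter> X" "(UNIV - V) \<inter> X"] by simp
  qed
  show "outer_mass (V \<inter> X) + outer_mass ((UNIV - V) \<inter> X) \<le> outer_mass X"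
  proof (rule field_le_epsilon)
    fix e :: real assume e: "e > 0"
    obtain U where U: "open U" "X \<subseteq> U" "open_mass U < outer_mass X + e" using outer_mass_approx[OF e] by blast
    have "outer_mass (V \<inter> X) \<le> open_mass (U \<inter> V)" using U oV by (intro outer_mass_le_open_mass) auto
    moreover have "outer_mass ((UNIV - V) \<inter> X) \<le> outer_mass (U - V)" using U by (intro outer_mass_mono) auto
    moreover have "open_mass (U \<inter> V) + outer_mass (U - V) \<le> open_mass U" by (rule open_mass_split[OF U(1) oV])
    ultimately show "outer_mass (V \<inter> X) + outer_mass ((UNIV - V) \<inter> X) \<le> outer_mass X + e" using U(3) by linarith
  qed
qed

definition outer_mass_ennreal :: "'a set \<Rightarrow> ennreal" where
  "outer_mass_ennreal A = ennreal (outer_mass A)"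

lemma outer_mass_empty: "outer_mass {} = 0"
  using outer_mass_le_open_mass[of "{}" "{}"] open_mass_empty outer_mass_nonneg[of "{}"] by simp

lemma outer_measure_space_outer_mass: "outer_measure_space (Pow UNIV) outer_mass_ennreal"
  unfolding outer_measure_space_def
proof (intro conjI)
  show "positive (Pow UNIV) outer_mass_ennreal" unfolding positive_def outer_mass_ennreal_def using outer_mass_empty by simp
  show "increasing (Pow UNIV) outer_mass_ennreal" unfolding increasing_def outer_mass_ennreal_def
    by (auto intro!: ennreal_leI outer_mass_mono)
  show "countably_subadditive (Pow UNIV) outer_mass_ennreal"
    unfolding countably_subadditive_def
  proof (intro allI impI)
    fix A :: "nat \<Rightarrow> 'a set"
    show "outer_mass_ennreal (\<Union>i. A i) \<le> (\<Sum>i. outer_mass_ennreal (A i))"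
    proof (rule ennreal_le_epsilon)
      fix e :: real assume e: "e > 0"
      have "\<forall>i. \<exists>V. open V \<and> A i \<subseteq> V \<and> open_mass V < outer_mass (A i) + e * (1/2)^Suc i"
        using e by (intro allI outer_mass_approx) simp
      then obtain V where V: "\<And>i. open (V i)" "\<And>i. A i \<subseteq> V i" "\<And>i. open_mass (V i) < outer_mass (A i) + e * (1/2)^Suc i"
        by metis
      have "outer_mass_ennreal (\<Union>i. A i) \<le> ennreal (open_mass (\<Union>i. V i))"
        unfolding outer_mass_ennreal_def using V by (intro ennreal_leI outer_mass_le_open_mass) auto
      also have "\<dots> \<le> (\<Sum>i. ennreal (open_mass (V i)))" by (rule open_mass_countable_UN[OF V(1)])
      also have "\<dots> \<le> (\<Sum>i. outer_mass_ennreal (A i) + ennreal (e * (1/2)^Suc i))"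
      proof (intro suminf_le allI)
        fix i
        have "ennreal (open_mass (V i)) \<le> ennreal (outer_mass (A i) + e * (1/2)^Suc i)"
          using V(3)[of i] by (intro ennreal_leI) simp
        also have "\<dots> = outer_mass_ennreal (A i) + ennreal (e * (1/2)^Suc i)"
          unfolding outer_mass_ennreal_def using outer_mass_nonneg e by (intro ennreal_plus) auto
        finally show "ennreal (open_mass (V i)) \<le> outer_mass_ennreal (A i) + ennreal (e * (1/2)^Suc i)" .
      qed auto
      also have "\<dots> = (\<Sum>i. outer_mass_ennreal (A i)) + (\<Sum>i. ennreal (e * (1/2)^Suc i))"
        by (rule suminf_add[symmetric]) auto
      also have "(\<Sum>i. ennreal (e * (1/2)^Suc i)) = ennreal e"
      proof (rule suminf_ennreal_eq)
        show "0 \<le> e * (1/2)^Suc i" for i using e by simp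
        show "(\<lambda>i. e * (1/2)^Suc i) sums e" using sums_mult[OF power_half_series, of e] by simp
      qed
      finally show "outer_mass_ennreal (\<Union>i. A i) \<le> (\<Sum>i. outer_mass_ennreal (A i)) + ennreal e" .
    qed
  qed
qed

lemma open_in_lambda_system:
  assumes oV: "open V" shows "V \<in> lambda_system UNIV (Pow UNIV) outer_mass_ennreal"
  unfolding lambda_system_def
proof (intro CollectI conjI ballI)
  show "V \<in> Pow UNIV" by simp
  fix X :: "'a set"
  have "outer_mass_ennreal (V \<inter> X) + outer_mass_ennreal ((UNIV - V) \<inter> X) = ennreal (outer_mass (V \<inter> X) + outer_mass ((UNIV - V) \<inter> X))"
    unfolding outer_mass_ennreal_def by (rule ennreal_plus[symmetric]) (rule outer_mass_nonneg)+
  also have "\<dots> = outer_mass_ennreal X" unfolding outer_mass_ennreal_def outer_mass_split[OF oV] ..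
  finally show "outer_mass_ennreal (V \<inter> X) + outer_mass_ennreal ((UNIV - V) \<inter> X) = outer_mass_ennreal X" .
qed

definition riesz_measure :: "'a measure" where
  "riesz_measure = measure_of UNIV (sets borel) outer_mass_ennreal"

lemma riesz_measure_facts:
  shows "sets riesz_measure = sets borel" "\<And>A. A \<in> sets borel \<Longrightarrow> emeasure riesz_measure A = outer_mass_ennreal A"
    "fin_borel_measure riesz_measure" "\<And>A. A \<in> sets borel \<Longrightarrow> measure riesz_measure A = outer_mass A"
proof -
  have ms: "measure_space UNIV (lambda_system UNIV (Pow UNIV) outer_mass_ennreal) outer_mass_ennreal"
    by (rule sigma_algebra.caratheodory_lemma[OF sigma_algebra_Pow outer_measure_space_outer_mass])
  then have sa: "sigma_algebra UNIV (lambda_system UNIV (Pow UNIV) outer_mass_ennreal)" by (simp add: measure_space_def)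
  have sab: "sigma_algebra UNIV (sets borel)"
    unfolding sets_borel by (rule sigma_algebra_sigma_sets) simp
  have "sigma_sets UNIV {S. open S} \<subseteq> lambda_system UNIV (Pow UNIV) outer_mass_ennreal"
    using open_in_lambda_system by (intro sigma_algebra.sigma_sets_subset[OF sa]) auto
  then have bor: "sets borel \<subseteq> lambda_system UNIV (Pow UNIV) outer_mass_ennreal" by (simp add: sets_borel)
  have ms2: "measure_space UNIV (sets borel) outer_mass_ennreal" by (rule measure_down[OF ms sab bor])
  show sK: "sets riesz_measure = sets borel" unfolding riesz_measure_def
    using sets_measure_of[of "sets borel" UNIV outer_mass_ennreal] sigma_algebra.sigma_sets_eq[OF sab] by simp
  show em: "\<And>A. A \<in> sets borel \<Longrightarrow> emeasure riesz_measure A = outer_mass_ennreal A" unfolding riesz_measure_def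
    using ms2 unfolding measure_space_def by (intro emeasure_measure_of_sigma) auto
  have spK: "space riesz_measure = UNIV" using sK by (metis sets_eq_imp_space_eq space_borel)
  show "fin_borel_measure riesz_measure" unfolding fin_borel_measure_def
  proof (intro conjI sK finite_measureI)
    show "emeasure riesz_measure (space riesz_measure) \<noteq> \<infinity>" using em[of UNIV] spK by (simp add: outer_mass_ennreal_def)
  qed
  show "\<And>A. A \<in> sets borel \<Longrightarrow> measure riesz_measure A = outer_mass A"
    using em outer_mass_nonneg by (simp add: measure_def outer_mass_ennreal_def)
qed

lemma measure_riesz_measure_open: "open V \<Longrightarrow> measure riesz_measure V = open_mass V"
  using riesz_measure_facts(4)[of V] outer_mass_open by simp

lemma measure_riesz_measure_UNIV: "measure riesz_measure UNIV = L (\<lambda>x. 1)"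
  using measure_riesz_measure_open[of UNIV] open_mass_UNIV by simp

lemma integrable_riesz_measure: "cfun \<phi> \<Longrightarrow> integrable riesz_measure \<phi>"
  by (rule integrable_cfun[OF cX riesz_measure_facts(3)])

context
  fixes \<phi> :: "'a \<Rightarrow> real" and a :: real
  assumes \<phi>: "cfun \<phi>" and a: "a > 0"
begin

lemma open_superlevel: "open {x. t < \<phi> x}"
  using \<phi> unfolding cfun_def by (intro open_Collect_less continuous_on_const) auto

lemma integral_layer_le: "integral\<^sup>L riesz_measure (layer a \<phi> j) \<le> a * open_mass {x. real j * a < \<phi> x}"
proof -
  define V where "V = {x. real j * a < \<phi> x}"
  have V: "V \<in> sets borel" using open_superlevel by (simp add: V_def)
  then have "emeasure riesz_measure V < \<infinity>"
    using riesz_measure_facts(2) by (simp add: outer_mass_ennreal_def)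
  then have ind: "integrable riesz_measure (indicator V :: 'a \<Rightarrow> real)"
    using riesz_measure_facts(1) V by (intro integrable_real_indicator) auto
  have "integral\<^sup>L riesz_measure (layer a \<phi> j) \<le> integral\<^sup>L riesz_measure (\<lambda>x. a * indicator V x)"
  proof (rule integral_mono[OF integrable_riesz_measure[OF cfun_layer[OF \<phi>]]])
    show "integrable riesz_measure (\<lambda>x. a * indicator V x)" using ind by simp
    show "layer a \<phi> j x \<le> a * indicator V x" for x using a by (auto simp: layer_def V_def indicator_def)
  qed
  also have "\<dots> = a * measure riesz_measure V"
    using fin_borel_measure_space[OF riesz_measure_facts(3)] by simp
  finally show ?thesis unfolding V_def using measure_riesz_measure_open[OF open_superlevel] by simp
qed

lemma open_mass_le_layer: "a * open_mass {x. real (Suc j) * a < \<phi> x} \<le> L (layer a \<phi> j)"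
proof -
  have "L \<psi> \<le> L (layer a \<phi> j) / a" if \<psi>: "subordinate {x. real (Suc j) * a < \<phi> x} \<psi>" for \<psi>
  proof -
    have "a * \<psi> x \<le> layer a \<phi> j x" for x
    proof (cases "real (Suc j) * a < \<phi> x")
      case True
      then have "layer a \<phi> j x = a" by (simp add: layer_def algebra_simps)
      then show ?thesis using \<psi> a unfolding subordinate_def by (simp add: mult_left_le)
    next
      case False
      then show ?thesis using \<psi> a unfolding subordinate_def layer_def by simp
    qed
    then have "L (\<lambda>x. a * \<psi> x) \<le> L (layer a \<phi> j)"
      using \<psi> cfun_layer[OF \<phi>] unfolding subordinate_def by (intro L_mono) auto
    then show ?thesis using L_scale \<psi> a unfolding subordinate_def by (simp add: field_simps)
  qed
  then have "open_mass {x. real (Suc j) * a < \<phi> x} \<le> L (layer a \<phi> j) / a" by (rule open_mass_least)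
  then show ?thesis using a by (simp add: field_simps)
qed

end

text \<open>Slicing \<open>0 \<le> \<phi> \<le> N a\<close> into the layers of height \<open>a\<close>, the integral and \<open>L\<close> are compared
  layer by layer; the two bounds telescope up to an error \<open>a L 1\<close>.\<close>

lemma integral_riesz_measure_le_approx:
  assumes \<phi>: "cfun \<phi>" and bounds: "\<And>x. 0 \<le> \<phi> x" "\<And>x. \<phi> x \<le> real N * a" and a: "a > 0"
  shows "integral\<^sup>L riesz_measure \<phi> \<le> L \<phi> + a * L (\<lambda>x. 1)"
proof -
  define V where "V j = {x. real j * a < \<phi> x}" for j
  have layers: "\<phi> = (\<lambda>x. \<Sum>j<N. layer a \<phi> j x)" using sum_layer[where \<phi>=\<phi> and N=N, OF a bounds] by (simp add: fun_eq_iff)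
  have "integral\<^sup>L riesz_measure \<phi> = (\<Sum>j<N. integral\<^sup>L riesz_measure (layer a \<phi> j))"
    by (subst layers, rule Bochner_Integration.integral_sum) (rule integrable_riesz_measure[OF cfun_layer[OF \<phi>]])
  also have "\<dots> \<le> (\<Sum>j<N. a * open_mass (V j))"
    unfolding V_def by (intro sum_mono integral_layer_le[OF \<phi> a])
  finally have upper: "integral\<^sup>L riesz_measure \<phi> \<le> (\<Sum>j<N. a * open_mass (V j))" .
  have "(\<Sum>j<N. a * open_mass (V (Suc j))) \<le> (\<Sum>j<N. L (layer a \<phi> j))"
    unfolding V_def by (intro sum_mono open_mass_le_layer[OF \<phi> a])
  also have "\<dots> = L \<phi>" by (subst (2) layers, rule L_sum[symmetric]) (auto intro: cfun_layer[OF \<phi>])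
  finally have lower: "(\<Sum>j<N. a * open_mass (V (Suc j))) \<le> L \<phi>" .
  have "(\<Sum>j<N. a * open_mass (V j)) - (\<Sum>j<N. a * open_mass (V (Suc j)))
      = a * (\<Sum>j<N. open_mass (V j) - open_mass (V (Suc j)))"
    by (simp add: sum_subtractf sum_distrib_left algebra_simps)
  also have "\<dots> = a * (open_mass (V 0) - open_mass (V N))" by (subst sum_lessThan_telescope') (rule refl)
  also have "\<dots> \<le> a * L (\<lambda>x. 1)"
    using open_mass_le_one[of "V 0"] open_mass_nonneg[of "V N"] a by (intro mult_left_mono) auto
  finally show ?thesis using upper lower by linarith
qed

lemma integral_riesz_measure_le:
  assumes \<phi>: "cfun \<phi>"
  shows "integral\<^sup>L riesz_measure \<phi> \<le> L \<phi>"
proof -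
  define s where "s = supnorm \<phi>"
  have s: "0 \<le> s" "\<And>x. \<bar>\<phi> x\<bar> \<le> s"
    using supnorm_nonneg[OF cX \<phi>] abs_le_supnorm[OF cX \<phi>] by (simp_all add: s_def)
  define \<psi> where "\<psi> = (\<lambda>x. \<phi> x + s)"
  have \<psi>: "cfun \<psi>" "0 \<le> \<psi> x" for x using \<phi> s(2)[of x] by (auto simp: \<psi>_def abs_le_iff)
  have "integral\<^sup>L riesz_measure \<psi> \<le> L \<psi>"
  proof (rule field_le_epsilon_mult[OF _ L_one_nonneg])
    fix e :: real assume e: "e > 0"
    obtain N :: nat where N: "(2 * s + 1) / e < real N" using reals_Archimedean2 by blast
    have "\<psi> x \<le> real N * e" for x
      using N e s(2)[of x] by (simp add: \<psi>_def abs_le_iff field_simps)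
    then show "integral\<^sup>L riesz_measure \<psi> \<le> L \<psi> + e * L (\<lambda>x. 1)"
      using \<psi> e by (intro integral_riesz_measure_le_approx) auto
  qed
  moreover have "integral\<^sup>L riesz_measure \<psi> = integral\<^sup>L riesz_measure \<phi> + s * L (\<lambda>x. 1)"
    unfolding \<psi>_def
    using Bochner_Integration.integral_add[OF integrable_riesz_measure[OF \<phi>] integrable_riesz_measure[OF cfun_const]]
      fin_borel_measure_space[OF riesz_measure_facts(3)] by (simp add: measure_riesz_measure_UNIV)
  moreover have "L \<psi> = L \<phi> + s * L (\<lambda>x. 1)"
    unfolding \<psi>_def using L_add[OF \<phi> cfun_const] L_scale[OF cfun_const[of 1], of s] by simp
  ultimately show ?thesis by simp
qed

theorem riesz_representation: "\<exists>K. fin_borel_measure K \<and> (\<forall>\<phi>. cfun \<phi> \<longrightarrow> integral\<^sup>L K \<phi> = L \<phi>)"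
proof (intro exI conjI allI impI)
  show "fin_borel_measure riesz_measure" by (rule riesz_measure_facts(3))
  fix \<phi> :: "'a \<Rightarrow> real" assume c: "cfun \<phi>"
  have "integral\<^sup>L riesz_measure (\<lambda>x. - \<phi> x) \<le> L (\<lambda>x. - \<phi> x)"
    by (rule integral_riesz_measure_le[OF cfun_uminus[OF c]])
  moreover have "L (\<lambda>x. - \<phi> x) = - L \<phi>" using L_scale[OF c, of "-1"] by simp
  ultimately have "L \<phi> \<le> integral\<^sup>L riesz_measure \<phi>" by simp
  then show "integral\<^sup>L riesz_measure \<phi> = L \<phi>" using integral_riesz_measure_le[OF c] by simp
qed

end

section \<open>Dominating measures\<close>

definition cfun_span :: "('a::topological_space \<Rightarrow> real) \<Rightarrow> ('a \<Rightarrow> real) set" where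
  "cfun_span h = {w. \<exists>\<psi> t. cfun \<psi> \<and> w = (\<lambda>x. \<psi> x + t * h x)}"

lemma cfun_spanI: "cfun \<psi> \<Longrightarrow> (\<And>x. w x = \<psi> x + t * h x) \<Longrightarrow> w \<in> cfun_span h"
  unfolding cfun_span_def by fastforce

lemma cfun_in_cfun_span: "cfun \<psi> \<Longrightarrow> \<psi> \<in> cfun_span h"
  by (rule cfun_spanI[where t=0]) auto

lemma in_cfun_span: "h \<in> cfun_span h"
  by (rule cfun_spanI[where \<psi>="\<lambda>x. 0" and t=1]) auto

lemma cfun_span_bounded:
  fixes h :: "'a::metric_space \<Rightarrow> real"
  assumes cX: "compact (UNIV :: 'a set)" and h: "\<And>x. \<bar>h x\<bar> \<le> s" and w: "w \<in> cfun_span h"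
  shows "\<exists>B. \<forall>x. \<bar>w x\<bar> \<le> B"
proof -
  obtain \<psi> t where \<psi>: "cfun \<psi>" "w = (\<lambda>x. \<psi> x + t * h x)" using w unfolding cfun_span_def by blast
  have "\<bar>w x\<bar> \<le> supnorm \<psi> + \<bar>t\<bar> * s" for x
    using abs_le_supnorm[OF cX \<psi>(1), of x] mult_left_mono[OF h[of x] abs_ge_zero[of t]]
      abs_triangle_ineq[of "\<psi> x" "t * h x"]
    by (simp add: \<psi>(2) abs_mult)
  then show ?thesis by blast
qed

context
  fixes \<mu> :: "('a::metric_space \<Rightarrow> real) \<Rightarrow> real" and h :: "'a \<Rightarrow> real" and s :: real
  assumes cX: "compact (UNIV :: 'a set)" and \<mu>: "SMp \<mu>" and h: "\<And>x. \<bar>h x\<bar> \<le> s"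
begin

lemma sublinear_functional_upper_sm: "sublinear_functional (cfun_span h) (upper_sm \<mu>)"
proof
  fix x y assume "x \<in> cfun_span h" "y \<in> cfun_span h"
  then obtain \<psi>1 t1 \<psi>2 t2 where "cfun \<psi>1" "x = (\<lambda>z. \<psi>1 z + t1 * h z)" "cfun \<psi>2" "y = (\<lambda>z. \<psi>2 z + t2 * h z)"
    unfolding cfun_span_def by blast
  then show "(\<lambda>t. x t + y t) \<in> cfun_span h"
    by (intro cfun_spanI[where \<psi>="\<lambda>z. \<psi>1 z + \<psi>2 z" and t="t1 + t2"]) (auto simp: algebra_simps)
next
  fix x c assume "x \<in> cfun_span h"
  then obtain \<psi> t where "cfun \<psi>" "x = (\<lambda>z. \<psi> z + t * h z)" unfolding cfun_span_def by blast
  then show "(\<lambda>t. c * x t) \<in> cfun_span h"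
    by (intro cfun_spanI[where \<psi>="\<lambda>z. c * \<psi> z" and t="c * t"]) (auto simp: algebra_simps)
next
  fix x y assume "x \<in> cfun_span h" "y \<in> cfun_span h"
  then obtain B1 B2 where "\<forall>z. \<bar>x z\<bar> \<le> B1" "\<forall>z. \<bar>y z\<bar> \<le> B2"
    using cfun_span_bounded[OF cX h] by meson
  then show "upper_sm \<mu> (\<lambda>t. x t + y t) \<le> upper_sm \<mu> x + upper_sm \<mu> y"
    by (intro upper_sm_add_le[OF \<mu>]) auto
next
  fix x c assume "x \<in> cfun_span h" "(c::real) > 0"
  then show "upper_sm \<mu> (\<lambda>t. c * x t) = c * upper_sm \<mu> x"
    using cfun_span_bounded[OF cX h] upper_sm_mult_pos[OF \<mu>] by meson
qed

lemma upper_sm_zero: "upper_sm \<mu> (\<lambda>x. 0) = 0"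
  using upper_sm_cfun[OF \<mu> cX cfun_const] SMp_zero[OF \<mu>] by simp

lemma upper_sm_line_ge: "t * upper_sm \<mu> h \<le> upper_sm \<mu> (\<lambda>x. t * h x)"
proof -
  have th: "\<bar>t * h x\<bar> \<le> \<bar>t\<bar> * s" "\<bar>- t * h x\<bar> \<le> \<bar>t\<bar> * s" for x
    using mult_left_mono[OF h[of x] abs_ge_zero[of t]] by (simp_all add: abs_mult)
  consider "t = 0" | "t > 0" | "t < 0" by linarith
  then show ?thesis
  proof cases
    case 1 then show ?thesis using upper_sm_zero by simp
  next
    case 2 then show ?thesis using upper_sm_mult_pos[OF \<mu> 2 h] by simp
  next
    case 3
    have "0 = upper_sm \<mu> (\<lambda>x. t * h x + (- t) * h x)" using upper_sm_zero by simp
    also have "\<dots> \<le> upper_sm \<mu> (\<lambda>x. t * h x) + upper_sm \<mu> (\<lambda>x. (- t) * h x)"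
      using th by (rule upper_sm_add_le[OF \<mu>])
    also have "upper_sm \<mu> (\<lambda>x. (- t) * h x) = (- t) * upper_sm \<mu> h"
      using 3 by (intro upper_sm_mult_pos[OF \<mu> _ h]) simp
    finally show ?thesis by simp
  qed
qed

lemma dominated_graph_line:
  "dominated_graph (cfun_span h) (upper_sm \<mu>) {((\<lambda>x. t * h x), t * upper_sm \<mu> h) | t. True}"
  unfolding dominated_graph_def
proof (intro conjI allI impI; (elim CollectE exE conjE)?)
  fix x a t assume "(x, a) = ((\<lambda>x. t * h x), t * upper_sm \<mu> h)"
  then show "x \<in> cfun_span h" "a \<le> upper_sm \<mu> x"
    using upper_sm_line_ge by (auto intro: cfun_spanI[where \<psi>="\<lambda>x. 0"])
next
  fix x a t y b t' assume "(x, a) = ((\<lambda>x. t * h x), t * upper_sm \<mu> h)"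
    "(y, b) = ((\<lambda>x. t' * h x), t' * upper_sm \<mu> h)"
  then show "((\<lambda>z. x z + y z), a + b) \<in> {((\<lambda>x. t * h x), t * upper_sm \<mu> h) | t. True}"
    by (auto intro!: exI[of _ "t + t'"] simp: algebra_simps)
next
  fix x a c t assume "(x, a) = ((\<lambda>x. t * h x), t * upper_sm \<mu> h)"
  then show "((\<lambda>z. c * x z), c * a) \<in> {((\<lambda>x. t * h x), t * upper_sm \<mu> h) | t. True}"
    by (auto intro!: exI[of _ "c * t"])
next
  fix x a b t t' assume "(x, a) = ((\<lambda>x. t * h x), t * upper_sm \<mu> h)"
    "(x, b) = ((\<lambda>x. t' * h x), t' * upper_sm \<mu> h)"
  then have "t = t' \<or> h = (\<lambda>x. 0)" by (auto simp: fun_eq_iff)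
  then show "a = b" using \<open>(x, a) = _\<close> \<open>(x, b) = _\<close> upper_sm_zero by auto
qed blast

lemma exists_linear_below_upper_sm:
  obtains L where "\<And>w. w \<in> cfun_span h \<Longrightarrow> L w \<le> upper_sm \<mu> w"
    "\<And>v w. v \<in> cfun_span h \<Longrightarrow> w \<in> cfun_span h \<Longrightarrow> L (\<lambda>x. v x + w x) = L v + L w"
    "\<And>w c. w \<in> cfun_span h \<Longrightarrow> L (\<lambda>x. c * w x) = c * L w"
    "L h = upper_sm \<mu> h"
proof -
  interpret sublinear_functional "cfun_span h" "upper_sm \<mu>" by (rule sublinear_functional_upper_sm)
  obtain L where L: "\<forall>w\<in>cfun_span h. L w \<le> upper_sm \<mu> w"
    "\<forall>v\<in>cfun_span h. \<forall>w\<in>cfun_span h. L (\<lambda>x. v x + w x) = L v + L w"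
    "\<forall>w\<in>cfun_span h. \<forall>c. L (\<lambda>x. c * w x) = c * L w"
    and line: "\<forall>x a. (x, a) \<in> {((\<lambda>x. t * h x), t * upper_sm \<mu> h) | t. True} \<longrightarrow> L x = a"
    using Hahn_Banach[OF dominated_graph_line] by blast
  have Lh: "L h = upper_sm \<mu> h" using line[rule_format, of h "1 * upper_sm \<mu> h"] by force
  show ?thesis by (rule that[of L]) (use L Lh in auto)
qed

text \<open>\<open>- L w = L (- w) \<le> \<mu>\<^sup>+ (- w) \<le> \<mu> 0 = 0\<close>.\<close>

lemma linear_below_upper_sm_nonneg:
  assumes below: "\<And>w. w \<in> cfun_span h \<Longrightarrow> L w \<le> upper_sm \<mu> w"
    and scale: "\<And>w c. w \<in> cfun_span h \<Longrightarrow> L (\<lambda>x. c * w x) = c * L w"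
    and w: "w \<in> cfun_span h" "\<And>x. 0 \<le> w x"
  shows "0 \<le> L w"
proof -
  have "(\<lambda>x. (-1) * w x) \<in> cfun_span h"
    using sublinear_functional.W_scale[OF sublinear_functional_upper_sm w(1)] .
  moreover obtain B where "\<forall>x. \<bar>(-1) * w x\<bar> \<le> B" using cfun_span_bounded[OF cX h w(1)] by auto
  ultimately have "L (\<lambda>x. (-1) * w x) \<le> \<mu> (\<lambda>x. 0)"
    using w(2) by (intro order_trans[OF below] upper_sm_le_abs[OF \<mu>, where B=B]) auto
  then show ?thesis using scale[OF w(1), of "-1"] SMp_zero[OF \<mu>] by simp
qed

lemma exists_Gset_upper_sm_ge: "\<exists>K\<in>Gset \<mu>. upper_sm \<mu> h \<le> upper_sm (meas_sm K) h"
proof -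
  obtain L where below: "\<And>w. w \<in> cfun_span h \<Longrightarrow> L w \<le> upper_sm \<mu> w"
    and add: "\<And>v w. v \<in> cfun_span h \<Longrightarrow> w \<in> cfun_span h \<Longrightarrow> L (\<lambda>x. v x + w x) = L v + L w"
    and scale: "\<And>w c. w \<in> cfun_span h \<Longrightarrow> L (\<lambda>x. c * w x) = c * L w"
    and Lh: "L h = upper_sm \<mu> h"
    by (rule exists_linear_below_upper_sm) blast
  note nonneg = linear_below_upper_sm_nonneg[OF below scale]
  interpret positive_linear_functional L
    using cX add scale cfun_in_cfun_span nonneg by unfold_locales (auto simp: cfun_in_cfun_span)
  obtain K where K: "fin_borel_measure K" "\<And>\<phi>. cfun \<phi> \<Longrightarrow> integral\<^sup>L K \<phi> = L \<phi>"
    using riesz_representation by blast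
  have "K \<in> Gset \<mu>"
    unfolding Gset_def sm_le_def meas_sm_def
    using K below[OF cfun_in_cfun_span] upper_sm_cfun[OF \<mu> cX] by auto
  moreover have "upper_sm \<mu> h \<le> upper_sm (meas_sm K) h"
  proof (rule upper_sm_greatest[of _ s])
    show "h x \<le> s" for x using h[of x] by linarith
    fix \<psi> assume \<psi>: "cfun \<psi>" "\<forall>x. h x \<le> \<psi> x"
    have "(\<lambda>x. \<psi> x + (-1) * h x) \<in> cfun_span h" by (rule cfun_spanI[OF \<psi>(1), where t="-1"]) simp
    then have "0 \<le> L (\<lambda>x. \<psi> x + (-1) * h x)" using \<psi>(2) by (intro nonneg) auto
    also have "\<dots> = L \<psi> - L h"
      using add[OF cfun_in_cfun_span[OF \<psi>(1)], of "\<lambda>x. (-1) * h x"] scale[OF in_cfun_span, of "-1"]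
        sublinear_functional.W_scale[OF sublinear_functional_upper_sm in_cfun_span, of "-1"] by simp
    finally show "upper_sm \<mu> h \<le> meas_sm K \<psi>" using Lh K(2)[OF \<psi>(1)] by (simp add: meas_sm_def)
  qed
  ultimately show ?thesis by blast
qed

lemma upper_sm_meas_sm_le_Gset:
  assumes "K \<in> Gset \<mu>"
  shows "upper_sm (meas_sm K) h \<le> upper_sm \<mu> h"
proof (rule upper_sm_greatest[of _ s])
  show "h x \<le> s" for x using h[of x] by linarith
  have K: "SMp (meas_sm K)" "sm_le (meas_sm K) \<mu>"
    using assms SMp_meas_sm[OF cX] unfolding Gset_def by auto
  fix \<psi> assume \<psi>: "cfun \<psi>" "\<forall>x. h x \<le> \<psi> x"
  have "upper_sm (meas_sm K) h \<le> meas_sm K \<psi>" using \<psi> h by (intro upper_sm_le_abs[OF K(1)]) auto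
  also have "\<dots> \<le> \<mu> \<psi>" using K(2) \<psi>(1) unfolding sm_le_def by simp
  finally show "upper_sm (meas_sm K) h \<le> \<mu> \<psi>" .
qed

lemma upper_sm_eq_SUP_Gset: "upper_sm \<mu> h = (SUP K\<in>Gset \<mu>. upper_sm (meas_sm K) h)"
proof -
  obtain K0 where "K0 \<in> Gset \<mu>" "upper_sm \<mu> h \<le> upper_sm (meas_sm K0) h"
    using exists_Gset_upper_sm_ge by blast
  then show ?thesis
    using upper_sm_meas_sm_le_Gset by (intro cSup_eq_maximum[symmetric]) (auto intro!: image_eqI antisym)
qed

end

lemma pushforward_eq_SUP_Gset:
  fixes D :: "'a::metric_space set" and f :: "'a \<Rightarrow> 'b::metric_space"
  assumes cX: "compact (UNIV :: 'a set)" and cY: "compact (UNIV :: 'b set)"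
    and dense: "closure D = UNIV" and \<mu>: "SMp \<mu>" and \<phi>: "cfun \<phi>"
  shows "pushforward D f \<mu> \<phi> = (SUP K\<in>Gset \<mu>. pushforward D f (meas_sm K) \<phi>)"
  unfolding pushforward_eq_upper_sm by (rule upper_sm_eq_SUP_Gset[OF cX \<mu> abs_pullback_le[OF dense cY \<phi>]])

theorem theorem2p10:
  fixes D :: "'a::metric_space set" and f :: "'a \<Rightarrow> 'b::metric_space"
  assumes cX: "compact (UNIV :: 'a set)"
    and cY: "compact (UNIV :: 'b set)"
    and cZ: "compact (UNIV :: 'c::metric_space set)"
    and odf: "od_map D f"
  shows
   "(\<forall>\<mu>. SMp \<mu> \<longrightarrow>
        SMp (pushforward D f \<mu>) \<and>
        pushforward D f \<mu> (\<lambda>_. 1) = \<mu> (\<lambda>_. 1) \<and>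
        pushforward D f \<mu> (\<lambda>_. -1) = \<mu> (\<lambda>_. -1) \<and>
        smnorm (pushforward D f \<mu>) = smnorm \<mu>)
    \<and>
    (\<forall>(D2 :: 'b set) (g :: 'b \<Rightarrow> 'c) U. od_map D2 g \<and> open U \<and> closure U = UNIV \<and> U \<subseteq> D \<and> f ` U \<subseteq> D2 \<longrightarrow>
        (\<forall>\<mu>. SMp \<mu> \<longrightarrow> sm_le (pushforward U (g \<circ> f) \<mu>) (pushforward D2 g (pushforward D f \<mu>))) \<and>
        (D = UNIV \<and> D2 = UNIV \<longrightarrow>
           (\<forall>\<mu>. SMp \<mu> \<longrightarrow> (\<forall>\<phi>. cfun \<phi> \<longrightarrow>
              pushforward D2 g (pushforward D f \<mu>) \<phi> = pushforward U (g \<circ> f) \<mu> \<phi>))))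
    \<and>
    (\<forall>\<mu>s \<mu>. (\<forall>n. SMp (\<mu>s n)) \<and> sm_weak_conv \<mu>s \<mu> \<longrightarrow>
        (\<forall>\<nu>. weak_cluster_point (\<lambda>n. pushforward D f (\<mu>s n)) \<nu> \<longrightarrow> sm_le \<nu> (pushforward D f \<mu>)) \<and>
        (D = UNIV \<longrightarrow> sm_weak_conv (\<lambda>n. pushforward D f (\<mu>s n)) (pushforward D f \<mu>)))
    \<and>
    (\<forall>M. fin_borel_measure M \<and> emeasure M (UNIV - D) = 0 \<longrightarrow>
        (\<forall>\<phi>. cfun \<phi> \<longrightarrow> pushforward D f (meas_sm M) \<phi> = (LINT x:D|M. \<phi> (f x))))
    \<and>
    (\<forall>\<mu>. SMp \<mu> \<longrightarrow>
        (\<forall>\<phi>. cfun \<phi> \<longrightarrow> pushforward D f \<mu> \<phi> = (SUP K\<in>Gset \<mu>. pushforward D f (meas_sm K) \<phi>)))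
    \<and>
    (\<forall>\<mu>1 \<mu>2. SMp \<mu>1 \<and> SMp \<mu>2 \<longrightarrow>
        sm_le (\<lambda>\<phi>. pushforward D f \<mu>1 \<phi> + pushforward D f \<mu>2 \<phi>)
              (pushforward D f (\<lambda>\<phi>. \<mu>1 \<phi> + \<mu>2 \<phi>)))"
proof -
  have dense: "closure D = UNIV" using odf by (simp add: od_map_def)
  have continuous: "continuous_on UNIV h" if "od_map UNIV h" for h :: "'d::topological_space \<Rightarrow> 'e::topological_space"
    using that by (simp add: od_map_def)
  show ?thesis
    apply (intro conjI allI impI; (elim conjE)?)
    subgoal by (rule SMp_pushforward[OF cX cY odf])
    subgoal by (rule pushforward_const[OF cY dense])
    subgoal by (rule pushforward_const[OF cY dense])
    subgoal by (rule smnorm_pushforward[OF cX cY odf])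
    subgoal by (rule pushforward_comp_le[OF cY cZ dense]) (simp_all add: od_map_def)
    subgoal using odf by (simp, intro pushforward_comp_eq[OF cX cY cZ] continuous) simp_all
    subgoal by (rule weak_cluster_point_le_pushforward[OF cY dense]) auto
    subgoal using odf by (simp, intro sm_weak_conv_pushforward[OF cX cY] continuous) auto
    subgoal by (rule pushforward_meas_sm[OF cX cY odf])
    subgoal by (rule pushforward_eq_SUP_Gset[OF cX cY dense])
    subgoal by (rule pushforward_add_ge[OF cY dense])
    done
qed

end
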